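(* Let $\mathcal F_0(\mathbb N)$ be the set of all $f\in l^\infty(\mathbb N)$ with $\mathrm{AE}(f)=0$ and finite range. Then $E_0(\mathbb N)$ is totally disconnected if and only if $\mathcal E_0(\mathbb N)$ equals the norm closure of $\mathcal F_0(\mathbb N)$ in $l^\infty(\mathbb N)$.
   Context: $\mathbb N=\{0,1,2,\ldots\}$ and $l^\infty(\mathbb N)$ is the C*-algebra of bounded complex-valued functions on $\mathbb N$. Let $(\sigma_Af)(n)=f(n+1)$. An anqie is a unital C*-subalgebra $\mathcal A\subseteq l^\infty(\mathbb N)$ with $\sigma_A(\mathcal A)\subseteq\mathcal A$; $\mathcal A_{\{f\}}$ is the smallest anqie containing $f$. For an anqie $\mathcal A$ with maximal ideal space $X$, $A:X\to X$, $(A\rho)(g)=\rho(\sigma_Ag)$, is continuous and the anqie entropy is $\mathrm{AE}(\mathcal A)=h(A)$ (topological entropy); $\mathrm{AE}(f)=\mathrm{AE}(\mathcal A_{\{f\}})$. $\mathcal E_0(\mathbb N)=\{f\in l^\infty(\mathbb N):\mathrm{AE}(f)=0\}$ (an anqie), and $E_0(\mathbb N)$ is its maximal ideal space with the weak* topology. Totally disconnected means any two distinct points are separated by a clopen set. *)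

theory Defs
  imports "HOL-Analysis.Analysis"
begin

type_synonym seq = "nat \<Rightarrow> complex"

definition linf :: "seq set" where
  "linf = {f. bounded (range f)}"

definition sup_norm :: "seq \<Rightarrow> real" where
  "sup_norm f = (SUP n. cmod (f n))"

definition shift :: "seq \<Rightarrow> seq" where
  "shift f = (\<lambda>n. f (Suc n))"

definition is_anqie :: "seq set \<Rightarrow> bool" where
  "is_anqie A \<longleftrightarrow>
     A \<subseteq> linf \<and>
     (\<lambda>_. 1) \<in> A \<and>
     (\<forall>f\<in>A. \<forall>g\<in>A. (\<lambda>n. f n + g n) \<in> A \<and> (\<lambda>n. f n * g n) \<in> A) \<and>
     (\<forall>c. \<forall>f\<in>A. (\<lambda>n. c * f n) \<in> A) \<and>
     (\<forall>f\<in>A. (\<lambda>n. cnj (f n)) \<in> A) \<and>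
     (\<forall>f\<in>linf. (\<forall>e>0. \<exists>g\<in>A. sup_norm (\<lambda>n. f n - g n) < e) \<longrightarrow> f \<in> A) \<and>
     shift ` A \<subseteq> A"

definition anqie_gen :: "seq \<Rightarrow> seq set" where
  "anqie_gen f = \<Inter>{A. is_anqie A \<and> f \<in> A}"

text \<open>Maximal ideal space, realised (Gelfand) as the set of characters (nonzero
  multiplicative linear functionals), extended by 0 outside the algebra.\<close>
definition characters :: "seq set \<Rightarrow> (seq \<Rightarrow> complex) set" where
  "characters A = {\<rho>.
     \<rho> (\<lambda>_. 1) = 1 \<and>
     (\<forall>f\<in>A. \<forall>g\<in>A. \<rho> (\<lambda>n. f n + g n) = \<rho> f + \<rho> g \<and> \<rho> (\<lambda>n. f n * g n) = \<rho> f * \<rho> g) \<and>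
     (\<forall>c. \<forall>f\<in>A. \<rho> (\<lambda>n. c * f n) = c * \<rho> f) \<and>
     (\<forall>g. g \<notin> A \<longrightarrow> \<rho> g = 0)}"

text \<open>Weak* topology: topology of pointwise convergence on the characters.\<close>
definition weakstar :: "seq set \<Rightarrow> (seq \<Rightarrow> complex) topology" where
  "weakstar A = subtopology (product_topology (\<lambda>_. euclidean) UNIV) (characters A)"

definition anqie_map :: "seq set \<Rightarrow> (seq \<Rightarrow> complex) \<Rightarrow> (seq \<Rightarrow> complex)" where
  "anqie_map A \<rho> = (\<lambda>g. if g \<in> A then \<rho> (shift g) else 0)"

definition open_cover :: "'a topology \<Rightarrow> 'a set set \<Rightarrow> bool" where
  "open_cover X \<U> \<longleftrightarrow> (\<forall>U\<in>\<U>. openin X U) \<and> \<Union>\<U> = topspace X"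

definition cover_num :: "'a topology \<Rightarrow> 'a set set \<Rightarrow> nat" where
  "cover_num X \<U> = Inf {card \<V> | \<V>. \<V> \<subseteq> \<U> \<and> finite \<V> \<and> \<Union>\<V> = topspace X}"

definition iter_join :: "'a topology \<Rightarrow> ('a \<Rightarrow> 'a) \<Rightarrow> 'a set set \<Rightarrow> nat \<Rightarrow> 'a set set" where
  "iter_join X T \<U> n =
     {topspace X \<inter> (\<Inter>i<n. (T ^^ i) -` (U i)) | U. \<forall>i<n. U i \<in> \<U>}"

definition cover_entropy :: "'a topology \<Rightarrow> ('a \<Rightarrow> 'a) \<Rightarrow> 'a set set \<Rightarrow> ereal" where
  "cover_entropy X T \<U> =
     limsup (\<lambda>n. ereal (ln (real (cover_num X (iter_join X T \<U> n))) / real n))"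

definition top_entropy :: "'a topology \<Rightarrow> ('a \<Rightarrow> 'a) \<Rightarrow> ereal" where
  "top_entropy X T = (SUP \<U> \<in> {\<U>. open_cover X \<U>}. cover_entropy X T \<U>)"

definition AE_anqie :: "seq set \<Rightarrow> ereal" where
  "AE_anqie A = top_entropy (weakstar A) (anqie_map A)"

definition AE_fun :: "seq \<Rightarrow> ereal" where
  "AE_fun f = AE_anqie (anqie_gen f)"

definition E0 :: "seq set" where
  "E0 = {f \<in> linf. AE_fun f = 0}"

definition F0 :: "seq set" where
  "F0 = {f \<in> linf. AE_fun f = 0 \<and> finite (range f)}"

definition norm_closure :: "seq set \<Rightarrow> seq set" where
  "norm_closure S = {f \<in> linf. \<forall>e>0. \<exists>g\<in>S. sup_norm (\<lambda>n. f n - g n) < e}"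

definition totally_disconnected_top :: "'a topology \<Rightarrow> bool" where
  "totally_disconnected_top X \<longleftrightarrow>
     (\<forall>x\<in>topspace X. \<forall>y\<in>topspace X. x \<noteq> y \<longrightarrow>
        (\<exists>C. openin X C \<and> closedin X C \<and> x \<in> C \<and> y \<notin> C))"

end

theory Submission
  imports Defs
begin

text \<open>Zero entropy has a symbolic description: \<open>AE(f) = 0\<close> iff for every \<open>\<epsilon> > 0\<close> the number
  of \<open>\<epsilon>\<close>-distinguishable windows of length \<open>n\<close> of \<open>f\<close> grows subexponentially in \<open>n\<close>.
  Minimal subcovers of the joins of the cover \<open>{\<rho>. cmod (\<rho> f - c) < \<epsilon>}\<close> of the spectrum,
  evaluated at point evaluations, provide such windows; conversely, characters of the anqie
  generated by \<open>f\<close> depend uniformly continuously on finitely many shifts of \<open>f\<close> and point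
  evaluations are dense, so few windows give small subcovers of the joins. In particular
  \<open>E0\<close> is itself an anqie.

  If \<open>E0\<close> is the closure of its finite range elements, two distinct characters differ on a
  finite range \<open>h \<in> E0\<close>; characters take values in the range of \<open>h\<close>, so a level set of
  \<open>\<rho> \<mapsto> \<rho> h\<close> is a separating clopen set. Conversely, on a compact totally disconnected
  spectrum the Gelfand transform of \<open>g \<in> E0\<close> is uniformly approximated by a locally constant
  function with finitely many values; pulled back along the point evaluations it gives a finite
  range sequence close to \<open>g\<close>, which is locally determined by finitely many elements of \<open>E0\<close>
  and hence has zero entropy.\<close>

section \<open>Bounded sequences and anqies\<close>

lemma linf_iff: "f \<in> linf \<longleftrightarrow> (\<exists>B. \<forall>n. cmod (f n) \<le> B)"
  unfolding linf_def bounded_iff by auto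

lemma norm_le_sup_norm: "f \<in> linf \<Longrightarrow> cmod (f n) \<le> sup_norm f"
  unfolding sup_norm_def linf_iff by (auto intro!: cSUP_upper bdd_aboveI2)

lemma sup_norm_le: "(\<And>n. cmod (f n) \<le> B) \<Longrightarrow> sup_norm f \<le> B"
  unfolding sup_norm_def by (auto intro!: cSUP_least)

lemma sup_norm_nonneg: "f \<in> linf \<Longrightarrow> 0 \<le> sup_norm f"
  using norm_le_sup_norm[of f 0] by (meson norm_ge_zero order_trans)

lemma funpow_shift_apply: "(shift ^^ i) f n = f (n + i)"
  by (induction i arbitrary: n) (auto simp: shift_def)

lemma anqie_subset_linf: "is_anqie A \<Longrightarrow> A \<subseteq> linf"
  and anqie_one: "is_anqie A \<Longrightarrow> (\<lambda>_. 1) \<in> A"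
  and anqie_add: "is_anqie A \<Longrightarrow> f \<in> A \<Longrightarrow> g \<in> A \<Longrightarrow> (\<lambda>n. f n + g n) \<in> A"
  and anqie_mult: "is_anqie A \<Longrightarrow> f \<in> A \<Longrightarrow> g \<in> A \<Longrightarrow> (\<lambda>n. f n * g n) \<in> A"
  and anqie_scaleC: "is_anqie A \<Longrightarrow> f \<in> A \<Longrightarrow> (\<lambda>n. c * f n) \<in> A"
  and anqie_cnj: "is_anqie A \<Longrightarrow> f \<in> A \<Longrightarrow> (\<lambda>n. cnj (f n)) \<in> A"
  and anqie_shift: "is_anqie A \<Longrightarrow> f \<in> A \<Longrightarrow> shift f \<in> A"
  unfolding is_anqie_def by auto

lemma anqie_closed:
  "is_anqie A \<Longrightarrow> f \<in> linf \<Longrightarrow> (\<And>e. e > 0 \<Longrightarrow> \<exists>g\<in>A. sup_norm (\<lambda>n. f n - g n) < e) \<Longrightarrow> f \<in> A"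
  unfolding is_anqie_def by auto

lemma anqie_uniform_limit:
  assumes A: "is_anqie A" and f: "f \<in> linf" and s: "\<And>N. s N \<in> A"
    and err: "\<And>N m. cmod (f m - s N m) \<le> b N" and b: "b \<longlonglongrightarrow> 0"
  shows "f \<in> A"
proof (rule anqie_closed[OF A f])
  fix e :: real assume "e > 0"
  then obtain N where "b N < e"
    using order_tendstoD(2)[OF b] by (meson eventually_sequentially order_refl)
  moreover have "sup_norm (\<lambda>m. f m - s N m) \<le> b N" by (rule sup_norm_le[OF err])
  ultimately show "\<exists>g\<in>A. sup_norm (\<lambda>n. f n - g n) < e" using s[of N] by force
qed

lemma anqie_const: "is_anqie A \<Longrightarrow> (\<lambda>_. c) \<in> A"
  using anqie_scaleC[OF _ anqie_one, of A c] by simp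

lemma anqie_diff: "is_anqie A \<Longrightarrow> f \<in> A \<Longrightarrow> g \<in> A \<Longrightarrow> (\<lambda>n. f n - g n) \<in> A"
  using anqie_add[of A f "\<lambda>n. (-1) * g n"] anqie_scaleC[of A g "-1"] by simp

lemma anqie_funpow_shift: "is_anqie A \<Longrightarrow> f \<in> A \<Longrightarrow> (shift ^^ i) f \<in> A"
  by (induction i) (auto intro: anqie_shift)

lemma anqie_power: "is_anqie A \<Longrightarrow> f \<in> A \<Longrightarrow> (\<lambda>n. f n ^ k) \<in> A"
  by (induction k) (simp_all add: anqie_one anqie_mult)

lemma anqie_sum:
  fixes N :: nat
  shows "is_anqie A \<Longrightarrow> (\<And>k. k < N \<Longrightarrow> (\<lambda>n. F k n) \<in> A) \<Longrightarrow> (\<lambda>n. \<Sum>k<N. F k n) \<in> A"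
  by (induction N) (simp_all add: anqie_const[of A 0] anqie_add)

lemma linf_is_anqie: "is_anqie linf"
  unfolding is_anqie_def
proof (intro conjI ballI allI impI)
  fix f g assume "f \<in> linf" "g \<in> linf"
  then obtain B C where B: "\<And>n. cmod (f n) \<le> B" and C: "\<And>n. cmod (g n) \<le> C"
    unfolding linf_iff by auto
  have "cmod (f n + g n) \<le> B + C" for n
    using B[of n] C[of n] norm_triangle_ineq[of "f n" "g n"] by linarith
  then show "(\<lambda>n. f n + g n) \<in> linf" unfolding linf_iff by blast
  have "cmod (f n * g n) \<le> B * C" for n
    unfolding norm_mult using B[of n] C[of n] by (intro mult_mono) (auto intro: order_trans[OF norm_ge_zero])
  then show "(\<lambda>n. f n * g n) \<in> linf" unfolding linf_iff by blast
next
  fix c f assume "f \<in> linf"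
  then obtain B where "\<And>n. cmod (f n) \<le> B" unfolding linf_iff by auto
  then have "cmod (c * f n) \<le> cmod c * B" for n
    unfolding norm_mult by (intro mult_left_mono) auto
  then show "(\<lambda>n. c * f n) \<in> linf" unfolding linf_iff by blast
next
  have "(\<lambda>n. f (Suc n)) \<in> linf" if "f \<in> linf" for f
    using that unfolding linf_iff by blast
  then show "shift ` linf \<subseteq> linf" unfolding shift_def by auto
qed (auto simp: linf_iff)

lemma norm_diff_less_if_sup_norm_less:
  "f \<in> linf \<Longrightarrow> g \<in> linf \<Longrightarrow> sup_norm (\<lambda>n. f n - g n) < e \<Longrightarrow> cmod (f n - g n) < e"
  using norm_le_sup_norm[OF anqie_diff[OF linf_is_anqie], of f g n] by auto

lemma is_anqie_Inter:
  assumes "\<AA> \<noteq> {}" and anqie: "\<And>A. A \<in> \<AA> \<Longrightarrow> is_anqie A"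
  shows "is_anqie (\<Inter>\<AA>)"
  unfolding is_anqie_def
proof (intro conjI ballI allI impI)
  fix f assume f: "f \<in> linf" and approx: "\<forall>e>0. \<exists>g\<in>\<Inter>\<AA>. sup_norm (\<lambda>n. f n - g n) < e"
  show "f \<in> \<Inter>\<AA>"
  proof
    fix A assume "A \<in> \<AA>"
    with approx show "f \<in> A" by (intro anqie_closed[OF anqie f]) blast+
  qed
next
  show "\<Inter>\<AA> \<subseteq> linf" using assms anqie_subset_linf by blast
  show "(\<lambda>_. 1) \<in> \<Inter>\<AA>" using anqie anqie_one by blast
  show "shift ` \<Inter>\<AA> \<subseteq> \<Inter>\<AA>" using anqie anqie_shift by blast
next
  fix f g assume "f \<in> \<Inter>\<AA>" "g \<in> \<Inter>\<AA>"
  then show "(\<lambda>n. f n + g n) \<in> \<Inter>\<AA>" "(\<lambda>n. f n * g n) \<in> \<Inter>\<AA>"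
    using anqie anqie_add anqie_mult by blast+
next
  fix c f assume "f \<in> \<Inter>\<AA>"
  then show "(\<lambda>n. c * f n) \<in> \<Inter>\<AA>" "(\<lambda>n. cnj (f n)) \<in> \<Inter>\<AA>"
    using anqie anqie_scaleC anqie_cnj by blast+
qed

lemma
  assumes "h \<in> linf"
  shows is_anqie_anqie_gen: "is_anqie (anqie_gen h)"
    and anqie_gen_in: "h \<in> anqie_gen h"
    and anqie_gen_least: "is_anqie A \<Longrightarrow> h \<in> A \<Longrightarrow> anqie_gen h \<subseteq> A"
  unfolding anqie_gen_def using assms linf_is_anqie by (auto intro!: is_anqie_Inter)

section \<open>Characters\<close>

lemma character_one: "\<rho> \<in> characters A \<Longrightarrow> \<rho> (\<lambda>_. 1) = 1"
  and character_add: "\<rho> \<in> characters A \<Longrightarrow> f \<in> A \<Longrightarrow> g \<in> A \<Longrightarrow> \<rho> (\<lambda>n. f n + g n) = \<rho> f + \<rho> g"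
  and character_mult: "\<rho> \<in> characters A \<Longrightarrow> f \<in> A \<Longrightarrow> g \<in> A \<Longrightarrow> \<rho> (\<lambda>n. f n * g n) = \<rho> f * \<rho> g"
  and character_scaleC: "\<rho> \<in> characters A \<Longrightarrow> f \<in> A \<Longrightarrow> \<rho> (\<lambda>n. c * f n) = c * \<rho> f"
  and character_outside: "\<rho> \<in> characters A \<Longrightarrow> g \<notin> A \<Longrightarrow> \<rho> g = 0"
  unfolding characters_def by auto

lemma character_const: "\<rho> \<in> characters A \<Longrightarrow> is_anqie A \<Longrightarrow> \<rho> (\<lambda>_. c) = c"
  using character_scaleC[of \<rho> A "\<lambda>_. 1" c] character_one[of \<rho> A] anqie_one[of A] by simp

lemma character_diff:
  assumes "\<rho> \<in> characters A" "is_anqie A" "f \<in> A" "g \<in> A"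
  shows "\<rho> (\<lambda>n. f n - g n) = \<rho> f - \<rho> g"
  using character_add[of \<rho> A f "\<lambda>n. (-1) * g n"] character_scaleC[of \<rho> A g "-1"]
    anqie_scaleC[of A g "-1"] assms by simp

lemma character_sum:
  fixes N :: nat
  assumes "\<rho> \<in> characters A" "is_anqie A" "\<And>k. k < N \<Longrightarrow> (\<lambda>n. F k n) \<in> A"
  shows "\<rho> (\<lambda>n. \<Sum>k<N. F k n) = (\<Sum>k<N. \<rho> (\<lambda>n. F k n))"
  using assms(3)
proof (induction N)
  case 0
  then show ?case using character_const[OF assms(1,2), of 0] by simp
next
  case (Suc N)
  then show ?case
    using character_add[OF assms(1) anqie_sum[OF assms(2)], of N F "\<lambda>n. F N n"] by simp
qed

text \<open>Neumann series: with \<open>cmod (r m) \<le> R\<close>, the sequence \<open>u = 1 - r / R\<close> satisfies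
  \<open>0 \<le> u \<le> 1 - d / R < 1\<close>, so \<open>1 / r = (1 / R) * (\<Sum>k. u ^ k)\<close> converges uniformly.\<close>
lemma anqie_inverse_real:
  assumes A: "is_anqie A" and r: "r \<in> A" and d: "0 < d"
    and r_real: "\<And>m. Im (r m) = 0 \<and> d \<le> Re (r m)"
  shows "(\<lambda>m. 1 / r m) \<in> A"
proof -
  obtain R where R_bound: "\<And>m. cmod (r m) \<le> R"
    using subsetD[OF anqie_subset_linf[OF A] r] unfolding linf_iff by blast
  have r_le: "d \<le> Re (r m)" "Re (r m) \<le> R" for m
    using r_real[of m] R_bound[of m] abs_Re_le_cmod[of "r m"] by auto
  have R: "0 < R" "d \<le> R" using r_le[of 0] d by auto
  define u where "u = (\<lambda>m. 1 - r m / R)"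
  define q where "q = 1 - d / R"
  have q: "0 \<le> q" "q < 1" using d R by (auto simp: q_def field_simps)
  have u: "u \<in> A"
    unfolding u_def using anqie_diff[OF A anqie_one[OF A] anqie_scaleC[OF A r, of "1/R"]] by simp
  have r_nz: "r m \<noteq> 0" and d_le: "d \<le> cmod (r m)" for m
    using r_le[of m] abs_Re_le_cmod[of "r m"] d by auto
  have u_le: "cmod (u m) \<le> q" for m
  proof -
    have "u m = complex_of_real (1 - Re (r m) / R)"
      using r_real[of m] unfolding u_def by (simp add: complex_eq_iff)
    then have "cmod (u m) = \<bar>1 - Re (r m) / R\<bar>" by (simp only: norm_of_real)
    then show ?thesis using r_le[of m] R by (simp add: q_def field_simps)
  qed
  define s where "s = (\<lambda>N m. (1/R) * (\<Sum>k<N. u m ^ k))"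
  have s: "s N \<in> A" for N
    unfolding s_def by (intro anqie_scaleC[OF A] anqie_sum[OF A] anqie_power[OF A u])
  have s_err: "1 / r m - s N m = u m ^ N / r m" for N m
  proof -
    have "u m \<noteq> 1" using r_nz[of m] R unfolding u_def by auto
    then have "s N m = (1/R) * ((1 - u m ^ N) / (1 - u m))"
      unfolding s_def using sum_gp_strict[of "u m" N] by simp
    also have "\<dots> = (1 - u m ^ N) / r m"
      using R r_nz[of m] by (simp add: u_def field_simps)
    finally show ?thesis by (simp add: diff_divide_distrib)
  qed
  have s_err_le: "cmod (1 / r m - s N m) \<le> q ^ N / d" for N m
    unfolding s_err norm_divide norm_power
    using u_le[of m] d_le[of m] d q by (intro frac_le power_mono) auto
  have "(\<lambda>m. 1 / r m) \<in> linf"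
    unfolding linf_iff using d_le d by (auto simp: norm_divide intro!: exI[of _ "1/d"] frac_le)
  moreover have "(\<lambda>N. q ^ N / d) \<longlonglongrightarrow> 0"
    using q by (intro tendsto_divide_zero LIMSEQ_power_zero) auto
  ultimately show ?thesis using anqie_uniform_limit[where b = "\<lambda>N. q ^ N / d", OF A _ s s_err_le] by blast
qed

lemma anqie_inverse:
  assumes A: "is_anqie A" and b: "b \<in> A" and d: "0 < d" and b_ge: "\<And>m. d \<le> cmod (b m)"
  shows "(\<lambda>m. 1 / b m) \<in> A"
proof -
  have "(\<lambda>m. 1 / (b m * cnj (b m))) \<in> A"
  proof (rule anqie_inverse_real[OF A anqie_mult[OF A b anqie_cnj[OF A b]]])
    show "0 < d\<^sup>2" using d by simp
    show "Im (b m * cnj (b m)) = 0 \<and> d\<^sup>2 \<le> Re (b m * cnj (b m))" for m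
      unfolding complex_norm_square[symmetric] using b_ge[of m] d by (simp add: power_mono)
  qed
  from anqie_mult[OF A anqie_cnj[OF A b] this]
  have "(\<lambda>m. cnj (b m) * (1 / (b m * cnj (b m)))) \<in> A" .
  moreover have "cnj (b m) * (1 / (b m * cnj (b m))) = 1 / b m" for m
    using b_ge[of m] d by auto
  ultimately show ?thesis by simp
qed

lemma character_ne_if_bounded_away:
  assumes \<rho>: "\<rho> \<in> characters A" and A: "is_anqie A" and g: "g \<in> A"
    and d: "0 < d" and g_far: "\<And>m. d \<le> cmod (g m - c)"
  shows "\<rho> g \<noteq> c"
proof
  assume "\<rho> g = c"
  define b where "b = (\<lambda>m. g m - c)"
  have b: "b \<in> A" unfolding b_def by (rule anqie_diff[OF A g anqie_const[OF A]])
  have "\<rho> b = 0"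
    using character_diff[OF \<rho> A g anqie_const[OF A]] character_const[OF \<rho> A] \<open>\<rho> g = c\<close>
    by (simp add: b_def)
  moreover have inv: "(\<lambda>m. 1 / b m) \<in> A"
    using anqie_inverse[OF A b d] g_far by (simp add: b_def)
  moreover have "b m \<noteq> 0" for m using g_far[of m] d by (auto simp: b_def)
  then have "(\<lambda>m. b m * (1 / b m)) = (\<lambda>_. 1)" by simp
  ultimately show False
    using character_mult[OF \<rho> b inv] character_one[OF \<rho>] by simp
qed

lemma norm_character_le_sup_norm:
  assumes \<rho>: "\<rho> \<in> characters A" and A: "is_anqie A" and g: "g \<in> A"
  shows "cmod (\<rho> g) \<le> sup_norm g"
proof (rule ccontr)
  assume "\<not> ?thesis"
  then have "0 < cmod (\<rho> g) - sup_norm g" by simp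
  moreover have "cmod (\<rho> g) - sup_norm g \<le> cmod (g m - \<rho> g)" for m
    using norm_le_sup_norm[of g m] anqie_subset_linf[OF A] g norm_triangle_ineq3[of "\<rho> g" "g m"]
    by (auto simp: norm_minus_commute)
  ultimately show False using character_ne_if_bounded_away[OF \<rho> A g] by blast
qed

lemma character_real:
  assumes \<rho>: "\<rho> \<in> characters A" and A: "is_anqie A" and g: "g \<in> A"
    and g_real: "\<And>m. Im (g m) = 0"
  shows "Im (\<rho> g) = 0"
proof (rule ccontr)
  assume "Im (\<rho> g) \<noteq> 0"
  moreover have "\<bar>Im (\<rho> g)\<bar> \<le> cmod (g m - \<rho> g)" for m
    using abs_Im_le_cmod[of "g m - \<rho> g"] g_real[of m] by simp
  ultimately show False
    using character_ne_if_bounded_away[OF \<rho> A g, of "\<bar>Im (\<rho> g)\<bar>"] by auto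
qed

text \<open>Split \<open>g\<close> into the real sequences \<open>(g + cnj g) / 2\<close> and \<open>(g - cnj g) / (2 * \<i>)\<close>.\<close>
lemma character_cnj:
  assumes \<rho>: "\<rho> \<in> characters A" and A: "is_anqie A" and g: "g \<in> A"
  shows "\<rho> (\<lambda>n. cnj (g n)) = cnj (\<rho> g)"
proof -
  define gc where "gc = (\<lambda>n. cnj (g n))"
  have gc: "gc \<in> A" unfolding gc_def by (rule anqie_cnj[OF A g])
  define a where "a = (\<lambda>n. (1/2) * (g n + gc n))"
  define b where "b = (\<lambda>n. (-\<i>/2) * (g n - gc n))"
  have a: "a \<in> A" unfolding a_def by (intro anqie_scaleC[OF A] anqie_add[OF A g gc])
  have b: "b \<in> A" unfolding b_def by (intro anqie_scaleC[OF A] anqie_diff[OF A g gc])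
  have "\<rho> a = (1/2) * \<rho> (\<lambda>n. g n + gc n)"
    unfolding a_def by (rule character_scaleC[OF \<rho> anqie_add[OF A g gc]])
  moreover have "\<rho> b = (-\<i>/2) * \<rho> (\<lambda>n. g n - gc n)"
    unfolding b_def by (rule character_scaleC[OF \<rho> anqie_diff[OF A g gc]])
  moreover note character_add[OF \<rho> g gc] character_diff[OF \<rho> A g gc]
  moreover have "Im (\<rho> a) = 0" by (rule character_real[OF \<rho> A a]) (simp add: a_def gc_def)
  moreover have "Im (\<rho> b) = 0" by (rule character_real[OF \<rho> A b]) (simp add: b_def gc_def)
  ultimately show ?thesis unfolding gc_def[symmetric] by (simp add: complex_eq_iff algebra_simps)
qed

text \<open>A finite range is bounded away from every point outside it.\<close>
lemma character_in_finite_range: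
  assumes \<rho>: "\<rho> \<in> characters A" and A: "is_anqie A" and h: "h \<in> A" and fin: "finite (range h)"
  shows "\<rho> h \<in> range h"
proof (rule ccontr)
  assume out: "\<rho> h \<notin> range h"
  define d where "d = Min ((\<lambda>x. cmod (x - \<rho> h)) ` range h)"
  have "\<forall>x\<in>range h. 0 < cmod (x - \<rho> h)" using out by (metis zero_less_norm_iff right_minus_eq)
  then have "0 < d" unfolding d_def using fin by (simp add: Min_gr_iff)
  moreover have "d \<le> cmod (h m - \<rho> h)" for m unfolding d_def using fin by (intro Min_le) auto
  ultimately show False using character_ne_if_bounded_away[OF \<rho> A h] by blast
qed

definition point_eval :: "seq set \<Rightarrow> nat \<Rightarrow> seq \<Rightarrow> complex" where
  "point_eval A m = (\<lambda>g. if g \<in> A then g m else 0)"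

lemma point_eval_character: "is_anqie A \<Longrightarrow> point_eval A m \<in> characters A"
  unfolding characters_def point_eval_def
  by (auto intro: anqie_one anqie_add anqie_mult anqie_scaleC)

lemma anqie_map_character:
  assumes A: "is_anqie A" and \<rho>: "\<rho> \<in> characters A"
  shows "anqie_map A \<rho> \<in> characters A"
  unfolding characters_def
proof (intro CollectI conjI ballI allI impI)
  fix f g assume f: "f \<in> A" and g: "g \<in> A"
  show "anqie_map A \<rho> (\<lambda>n. f n + g n) = anqie_map A \<rho> f + anqie_map A \<rho> g"
    using character_add[OF \<rho> anqie_shift[OF A f] anqie_shift[OF A g]] anqie_add[OF A f g] f g
    by (simp add: anqie_map_def shift_def)
  show "anqie_map A \<rho> (\<lambda>n. f n * g n) = anqie_map A \<rho> f * anqie_map A \<rho> g"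
    using character_mult[OF \<rho> anqie_shift[OF A f] anqie_shift[OF A g]] anqie_mult[OF A f g] f g
    by (simp add: anqie_map_def shift_def)
next
  fix c f assume f: "f \<in> A"
  show "anqie_map A \<rho> (\<lambda>n. c * f n) = c * anqie_map A \<rho> f"
    using character_scaleC[OF \<rho> anqie_shift[OF A f]] anqie_scaleC[OF A f] f
    by (simp add: anqie_map_def shift_def)
qed (use anqie_one[OF A] character_one[OF \<rho>] in \<open>simp_all add: anqie_map_def shift_def\<close>)

lemma funpow_anqie_map_character:
  "is_anqie A \<Longrightarrow> \<rho> \<in> characters A \<Longrightarrow> (anqie_map A ^^ j) \<rho> \<in> characters A"
  by (induction j) (auto intro: anqie_map_character)

lemma funpow_anqie_map_apply:
  assumes A: "is_anqie A" and g: "g \<in> A"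
  shows "(anqie_map A ^^ j) \<sigma> g = \<sigma> ((shift ^^ j) g)"
  using g
proof (induction j arbitrary: \<sigma> g)
  case (Suc j)
  have "(anqie_map A ^^ Suc j) \<sigma> g = (anqie_map A ^^ j) (anqie_map A \<sigma>) g"
    by (simp only: funpow_Suc_right comp_def)
  also have "\<dots> = anqie_map A \<sigma> ((shift ^^ j) g)" using Suc by simp
  also have "\<dots> = \<sigma> (shift ((shift ^^ j) g))"
    unfolding anqie_map_def using anqie_funpow_shift[OF A Suc.prems] by simp
  finally show ?case by simp
qed simp

lemma funpow_anqie_map_point_eval:
  assumes "is_anqie A" "g \<in> A"
  shows "(anqie_map A ^^ j) (point_eval A m) g = g (m + j)"
  using anqie_funpow_shift[OF assms]
  by (simp add: funpow_anqie_map_apply[OF assms] point_eval_def funpow_shift_apply)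

section \<open>The weak* topology on characters\<close>

lemma topspace_weakstar [simp]: "topspace (weakstar A) = characters A"
  unfolding weakstar_def by simp

lemma continuous_map_complex_mult [continuous_intros]:
  fixes f g :: "'a \<Rightarrow> complex"
  shows "continuous_map X euclidean f \<Longrightarrow> continuous_map X euclidean g \<Longrightarrow>
    continuous_map X euclidean (\<lambda>x. f x * g x)"
  by (simp add: continuous_map_atin tendsto_mult)

lemma continuous_map_weakstar_eval: "continuous_map (weakstar A) euclidean (\<lambda>\<rho>. \<rho> g)"
  unfolding weakstar_def by (auto intro: continuous_intros)

lemma closedin_characters:
  "closedin (product_topology (\<lambda>_. euclidean) UNIV) (characters A)"
proof -
  let ?P = "product_topology (\<lambda>_::seq. euclidean :: complex topology) UNIV"
  have eval: "continuous_map ?P euclidean (\<lambda>\<rho>. \<rho> g)" for g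
    by (rule continuous_map_product_projection) simp
  have closed_eq: "closedin ?P {\<rho>. F \<rho> = G \<rho>}"
    if "continuous_map ?P euclidean F" "continuous_map ?P euclidean G"
    for F G :: "(seq \<Rightarrow> complex) \<Rightarrow> complex"
    using closedin_continuous_maps_eq[OF Hausdorff_space_euclidean that] by simp
  have closed_imp: "closedin ?P {\<rho>. P \<longrightarrow> F \<rho> = G \<rho>}"
    if "continuous_map ?P euclidean F" "continuous_map ?P euclidean G"
    for P and F G :: "(seq \<Rightarrow> complex) \<Rightarrow> complex"
    using closed_eq[OF that] closedin_topspace[of ?P] by (cases P) auto
  define S where "S = (\<lambda>(f, g, c).
      {\<rho>. \<rho> (\<lambda>_. 1) = 1}
      \<inter> {\<rho>. f \<in> A \<and> g \<in> A \<longrightarrow> \<rho> (\<lambda>n. f n + g n) = \<rho> f + \<rho> g}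
      \<inter> {\<rho>. f \<in> A \<and> g \<in> A \<longrightarrow> \<rho> (\<lambda>n. f n * g n) = \<rho> f * \<rho> g}
      \<inter> {\<rho>. f \<in> A \<longrightarrow> \<rho> (\<lambda>n. c * f n) = c * \<rho> f}
      \<inter> {\<rho>. f \<notin> A \<longrightarrow> \<rho> f = 0})"
  have "closedin ?P (S x)" for x
    unfolding S_def
    by (simp only: split_beta, intro closedin_Int closed_eq closed_imp eval continuous_map_add
        continuous_map_complex_mult continuous_map_canonical_const)
  then have "closedin ?P (\<Inter>x. S x)" by (intro closedin_INT) auto
  moreover have "characters A = (\<Inter>x. S x)"
    unfolding characters_def S_def by auto
  ultimately show ?thesis by simp
qed

lemma compact_space_weakstar:
  assumes A: "is_anqie A"
  shows "compact_space (weakstar A)"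
proof -
  let ?P = "product_topology (\<lambda>_::seq. euclidean :: complex topology) UNIV"
  define K where "K = PiE UNIV (\<lambda>g. cball (0::complex) (if g \<in> A then sup_norm g else 0))"
  have "compactin ?P K" unfolding K_def by (subst compactin_PiE) auto
  moreover have "characters A \<subseteq> K"
    unfolding K_def using norm_character_le_sup_norm[OF _ A] character_outside by fastforce
  ultimately have "compactin ?P (characters A)"
    using closed_compactin closedin_characters by blast
  then show ?thesis unfolding weakstar_def by (rule compact_space_subtopology)
qed

definition weakstar_ball :: "seq set \<Rightarrow> seq set \<Rightarrow> real \<Rightarrow> (seq \<Rightarrow> complex) \<Rightarrow> (seq \<Rightarrow> complex) set"
  where "weakstar_ball A F r \<sigma> = {\<tau> \<in> characters A. \<forall>q\<in>F. cmod (\<tau> q - \<sigma> q) < r}"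

lemma openin_weakstar_ball:
  assumes "finite F"
  shows "openin (weakstar A) (weakstar_ball A F r \<sigma>)"
proof -
  have "openin (weakstar A) {\<tau> \<in> topspace (weakstar A). cmod (\<tau> q - \<sigma> q) \<in> {..<r}}" for q
    by (intro openin_continuous_map_preimage[of _ euclideanreal] continuous_intros
        continuous_map_weakstar_eval) simp
  then have "openin (weakstar A) ((\<Inter>q\<in>F. {\<tau> \<in> characters A. cmod (\<tau> q - \<sigma> q) < r}) \<inter> characters A)"
    using openin_INT[OF assms, of "weakstar A"] by simp
  moreover have "(\<Inter>q\<in>F. {\<tau> \<in> characters A. cmod (\<tau> q - \<sigma> q) < r}) \<inter> characters A = weakstar_ball A F r \<sigma>"
    unfolding weakstar_ball_def by auto
  ultimately show ?thesis by simp
qed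

lemma weakstar_ball_center: "\<sigma> \<in> characters A \<Longrightarrow> 0 < r \<Longrightarrow> \<sigma> \<in> weakstar_ball A F r \<sigma>"
  unfolding weakstar_ball_def by simp

lemma weakstar_ball_mono: "F \<subseteq> G \<Longrightarrow> r \<le> s \<Longrightarrow> weakstar_ball A G r \<sigma> \<subseteq> weakstar_ball A F s \<sigma>"
  unfolding weakstar_ball_def by fastforce

lemma weakstar_ball_triangle:
  "\<tau> \<in> weakstar_ball A F r \<sigma> \<Longrightarrow> \<sigma> \<in> weakstar_ball A F s \<rho> \<Longrightarrow> \<tau> \<in> weakstar_ball A F (r + s) \<rho>"
  unfolding weakstar_ball_def
  by (auto intro: norm_diff_triangle_less)

lemma weakstar_ball_subset_open:
  assumes U: "openin (weakstar A) U" and \<sigma>: "\<sigma> \<in> U"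
  shows "\<exists>F r. finite F \<and> F \<subseteq> A \<and> r > 0 \<and> weakstar_ball A F r \<sigma> \<subseteq> U"
proof -
  obtain W where W: "openin (product_topology (\<lambda>_. euclidean) UNIV) W" "U = W \<inter> characters A"
    using U unfolding weakstar_def openin_subtopology by auto
  have \<sigma>_char: "\<sigma> \<in> characters A" using W(2) \<sigma> by blast
  obtain V where V: "finite {g. V g \<noteq> UNIV}" "\<And>g. open (V g)" "\<sigma> \<in> PiE UNIV V" "PiE UNIV V \<subseteq> W"
    using W \<sigma> unfolding openin_product_topology_alt by auto
  define G where "G = {g. V g \<noteq> UNIV}"
  have "\<forall>g\<in>G. \<exists>r>0. ball (\<sigma> g) r \<subseteq> V g"
  proof
    fix g
    have "\<sigma> g \<in> V g" using V(3) by (auto simp: PiE_iff)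
    then show "\<exists>r>0. ball (\<sigma> g) r \<subseteq> V g" using V(2)[of g] by (auto simp: open_contains_ball)
  qed
  then obtain rg where rg: "\<And>g. g \<in> G \<Longrightarrow> rg g > 0 \<and> ball (\<sigma> g) (rg g) \<subseteq> V g" by metis
  define r where "r = Min (insert 1 (rg ` G))"
  have "finite G" using V(1) unfolding G_def .
  then have r: "r > 0" "\<And>g. g \<in> G \<Longrightarrow> r \<le> rg g"
    unfolding r_def using rg by (auto simp: Min_gr_iff)
  have "weakstar_ball A (G \<inter> A) r \<sigma> \<subseteq> U"
  proof
    fix \<tau> assume \<tau>: "\<tau> \<in> weakstar_ball A (G \<inter> A) r \<sigma>"
    then have \<tau>_char: "\<tau> \<in> characters A" unfolding weakstar_ball_def by blast
    have "\<tau> g \<in> V g" for g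
    proof (cases "g \<in> G")
      case True
      have "cmod (\<tau> g - \<sigma> g) < rg g"
      proof (cases "g \<in> A")
        case True
        with \<tau> \<open>g \<in> G\<close> have "cmod (\<tau> g - \<sigma> g) < r" unfolding weakstar_ball_def by blast
        then show ?thesis using r(2)[OF \<open>g \<in> G\<close>] by linarith
      next
        case False
        then show ?thesis
          using character_outside[OF \<sigma>_char False] character_outside[OF \<tau>_char False] rg[OF \<open>g \<in> G\<close>]
          by simp
      qed
      then have "\<tau> g \<in> ball (\<sigma> g) (rg g)" by (simp add: dist_norm norm_minus_commute)
      then show ?thesis using rg[OF True] by blast
    next
      case False
      then show ?thesis unfolding G_def by simp
    qed
    then have "\<tau> \<in> PiE UNIV V" by auto
    then show "\<tau> \<in> U" using V(4) W(2) \<tau>_char by blast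
  qed
  then show ?thesis using \<open>finite G\<close> r(1) by blast
qed

lemma weakstar_Lebesgue_number:
  assumes cpt: "compact_space (weakstar A)"
    and opn: "\<And>U. U \<in> \<U> \<Longrightarrow> openin (weakstar A) U" and cov: "characters A \<subseteq> \<Union>\<U>"
  shows "\<exists>F r. finite F \<and> F \<subseteq> A \<and> r > 0 \<and> (\<forall>\<sigma>\<in>characters A. \<exists>U\<in>\<U>. weakstar_ball A F r \<sigma> \<subseteq> U)"
proof -
  have "\<exists>F r U. finite F \<and> F \<subseteq> A \<and> r > 0 \<and> U \<in> \<U> \<and> weakstar_ball A F r \<sigma> \<subseteq> U"
    if \<sigma>: "\<sigma> \<in> characters A" for \<sigma>
  proof -
    obtain U where U: "U \<in> \<U>" "\<sigma> \<in> U" using cov \<sigma> by blast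
    with weakstar_ball_subset_open[OF opn[OF U(1)] U(2)] show ?thesis by blast
  qed
  then obtain F r U where FrU: "\<And>\<sigma>. \<sigma> \<in> characters A \<Longrightarrow>
      finite (F \<sigma>) \<and> F \<sigma> \<subseteq> A \<and> r \<sigma> > 0 \<and> U \<sigma> \<in> \<U> \<and> weakstar_ball A (F \<sigma>) (r \<sigma>) \<sigma> \<subseteq> U \<sigma>"
    by metis
  define N where "N = (\<lambda>\<sigma>. weakstar_ball A (F \<sigma>) (r \<sigma> / 2) \<sigma>)"
  have "\<forall>V \<in> N ` characters A. openin (weakstar A) V"
    using FrU by (auto simp: N_def openin_weakstar_ball)
  moreover have "\<sigma> \<in> N \<sigma>" if "\<sigma> \<in> characters A" for \<sigma>
    using FrU[OF that] weakstar_ball_center[OF that] by (simp add: N_def)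
  then have "topspace (weakstar A) \<subseteq> \<Union>(N ` characters A)" by auto
  ultimately obtain \<N> where "finite \<N>" "\<N> \<subseteq> N ` characters A" "characters A \<subseteq> \<Union>\<N>"
    using cpt unfolding compact_space_alt by (metis topspace_weakstar)
  then obtain S where S: "finite S" "S \<subseteq> characters A" "characters A \<subseteq> (\<Union>\<sigma>\<in>S. N \<sigma>)"
    by (metis finite_subset_image)
  define G where "G = (\<Union>\<sigma>\<in>S. F \<sigma>)"
  define s where "s = Min (insert 1 ((\<lambda>\<sigma>. r \<sigma> / 2) ` S))"
  have s_pos: "s > 0" unfolding s_def using S FrU by (auto simp: Min_gr_iff)
  have s_le: "s \<le> r \<sigma> / 2" if "\<sigma> \<in> S" for \<sigma>
    unfolding s_def using S(1) that by (intro Min_le) auto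
  have "\<exists>V\<in>\<U>. weakstar_ball A G s \<sigma> \<subseteq> V" if \<sigma>: "\<sigma> \<in> characters A" for \<sigma>
  proof -
    obtain \<sigma>0 where \<sigma>0: "\<sigma>0 \<in> S" "\<sigma> \<in> N \<sigma>0" using S(3) \<sigma> by blast
    have "weakstar_ball A G s \<sigma> \<subseteq> weakstar_ball A (F \<sigma>0) (r \<sigma>0 / 2) \<sigma>"
      using \<sigma>0 s_le by (intro weakstar_ball_mono) (auto simp: G_def)
    also have "\<dots> \<subseteq> weakstar_ball A (F \<sigma>0) (r \<sigma>0) \<sigma>0"
      using weakstar_ball_triangle[of _ A "F \<sigma>0" "r \<sigma>0 / 2" \<sigma> "r \<sigma>0 / 2" \<sigma>0] \<sigma>0(2)
      by (auto simp: N_def)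
    also have "\<dots> \<subseteq> U \<sigma>0" using FrU \<sigma>0(1) S(2) by blast
    finally show ?thesis using FrU \<sigma>0(1) S(2) by blast
  qed
  moreover have "finite G" "G \<subseteq> A" using S FrU unfolding G_def by blast+
  ultimately show ?thesis using s_pos by blast
qed

lemma weakstar_locally_constant_uniform:
  assumes A: "is_anqie A"
    and fibres: "\<And>\<sigma>. \<sigma> \<in> characters A \<Longrightarrow> openin (weakstar A) {\<tau> \<in> characters A. \<phi> \<tau> = \<phi> \<sigma>}"
  shows "\<exists>F r. finite F \<and> F \<subseteq> A \<and> r > 0 \<and>
    (\<forall>\<sigma>\<in>characters A. \<forall>\<tau>\<in>weakstar_ball A F r \<sigma>. \<phi> \<tau> = \<phi> \<sigma>)"
proof -
  let ?\<U> = "(\<lambda>\<sigma>. {\<tau> \<in> characters A. \<phi> \<tau> = \<phi> \<sigma>}) ` characters A"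
  obtain F r where Fr: "finite F" "F \<subseteq> A" "r > 0" "\<forall>\<sigma>\<in>characters A. \<exists>U\<in>?\<U>. weakstar_ball A F r \<sigma> \<subseteq> U"
    using weakstar_Lebesgue_number[OF compact_space_weakstar[OF A], of ?\<U>] fibres by blast
  have "\<phi> \<tau> = \<phi> \<sigma>" if "\<sigma> \<in> characters A" "\<tau> \<in> weakstar_ball A F r \<sigma>" for \<sigma> \<tau>
  proof -
    from Fr(4) that(1) obtain U where U: "U \<in> ?\<U>" "weakstar_ball A F r \<sigma> \<subseteq> U" by blast
    from U(1) obtain \<sigma>' where "U = {\<tau> \<in> characters A. \<phi> \<tau> = \<phi> \<sigma>'}" by (rule imageE)
    with U(2) have "weakstar_ball A F r \<sigma> \<subseteq> {\<tau> \<in> characters A. \<phi> \<tau> = \<phi> \<sigma>'}" by simp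
    then have "\<phi> \<tau> = \<phi> \<sigma>'" "\<phi> \<sigma> = \<phi> \<sigma>'"
      using weakstar_ball_center[OF that(1) Fr(3), of F] that(2) by blast+
    then show ?thesis by simp
  qed
  then show ?thesis using Fr by blast
qed

section \<open>Cover numbers and entropy\<close>

lemma cover_num_le:
  "\<V> \<subseteq> \<U> \<Longrightarrow> finite \<V> \<Longrightarrow> \<Union>\<V> = topspace X \<Longrightarrow> cover_num X \<U> \<le> card \<V>"
  unfolding cover_num_def Inf_nat_def by (intro Least_le) blast

lemma cover_num_attained:
  assumes "\<exists>\<V>. \<V> \<subseteq> \<U> \<and> finite \<V> \<and> \<Union>\<V> = topspace X"
  shows "\<exists>\<V>. \<V> \<subseteq> \<U> \<and> finite \<V> \<and> \<Union>\<V> = topspace X \<and> card \<V> = cover_num X \<U>"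
proof -
  let ?S = "{card \<V> | \<V>. \<V> \<subseteq> \<U> \<and> finite \<V> \<and> \<Union>\<V> = topspace X}"
  have "Inf ?S \<in> ?S" using assms by (intro Inf_nat_def1) blast
  then obtain \<V> where "Inf ?S = card \<V>" "\<V> \<subseteq> \<U>" "finite \<V>" "\<Union>\<V> = topspace X" by blast
  then show ?thesis unfolding cover_num_def by metis
qed

lemma iter_join_finite_cover:
  assumes cpt: "compact_space X" and opn: "\<And>U. U \<in> \<U> \<Longrightarrow> openin X U"
    and cov: "topspace X \<subseteq> \<Union>\<U>" and T: "\<And>x i. x \<in> topspace X \<Longrightarrow> (T ^^ i) x \<in> topspace X"
  shows "\<exists>\<V>. \<V> \<subseteq> iter_join X T \<U> n \<and> finite \<V> \<and> \<Union>\<V> = topspace X"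
proof -
  obtain \<U>0 where \<U>0: "finite \<U>0" "\<U>0 \<subseteq> \<U>" "topspace X \<subseteq> \<Union>\<U>0"
    using cpt opn cov unfolding compact_space_alt by metis
  define W where "W = (\<lambda>U. topspace X \<inter> (\<Inter>i<n. (T ^^ i) -` U i))"
  define \<V> where "\<V> = W ` PiE {..<n} (\<lambda>_. \<U>0)"
  have "\<V> \<subseteq> iter_join X T \<U> n"
    using \<U>0(2) unfolding \<V>_def W_def iter_join_def by (force simp: PiE_iff)
  moreover have "finite \<V>" unfolding \<V>_def using \<U>0(1) by (intro finite_imageI finite_PiE) auto
  moreover have "x \<in> \<Union>\<V>" if x: "x \<in> topspace X" for x
  proof -
    have "\<forall>i. \<exists>U. i < n \<longrightarrow> U \<in> \<U>0 \<and> (T ^^ i) x \<in> U" using T[OF x] \<U>0(3) by blast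
    then obtain U where U: "\<And>i. i < n \<Longrightarrow> U i \<in> \<U>0 \<and> (T ^^ i) x \<in> U i" by metis
    then have "restrict U {..<n} \<in> PiE {..<n} (\<lambda>_. \<U>0)" "x \<in> W (restrict U {..<n})"
      using x by (auto simp: W_def)
    then show ?thesis unfolding \<V>_def by blast
  qed
  moreover have "\<Union>\<V> \<subseteq> topspace X" unfolding \<V>_def W_def by auto
  ultimately show ?thesis by blast
qed

lemma cover_entropy_nonneg: "0 \<le> cover_entropy X T \<U>"
proof -
  have "0 \<le> ln (real N) / real n" for N n :: nat by (cases "N = 0") auto
  then show ?thesis
    unfolding cover_entropy_def by (intro le_Limsup always_eventually allI) simp_all
qed

lemma top_entropy_nonneg: "0 \<le> top_entropy X T"
proof -
  have "open_cover X {topspace X}" unfolding open_cover_def by auto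
  then show ?thesis
    unfolding top_entropy_def by (intro SUP_upper2[of "{topspace X}"] cover_entropy_nonneg) auto
qed

lemma cover_entropy_le_top_entropy: "open_cover X \<U> \<Longrightarrow> cover_entropy X T \<U> \<le> top_entropy X T"
  unfolding top_entropy_def by (intro SUP_upper) auto

lemma eventually_cover_num_le_exp:
  assumes ent: "cover_entropy X T \<U> \<le> 0" and "a > 0"
  shows "eventually (\<lambda>n. real (cover_num X (iter_join X T \<U> n)) \<le> exp (a * real n)) sequentially"
proof -
  let ?N = "\<lambda>n. cover_num X (iter_join X T \<U> n)"
  from ent \<open>a > 0\<close> have "Limsup sequentially (\<lambda>n. ereal (ln (real (?N n)) / real n)) < ereal a"
    unfolding cover_entropy_def by (simp add: le_less_trans)
  then have "eventually (\<lambda>n. ereal (ln (real (?N n)) / real n) < ereal a) sequentially"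
    by (rule Limsup_lessD)
  then show ?thesis
    using eventually_ge_at_top[of 1]
  proof eventually_elim
    case (elim n)
    then have ln_less: "ln (real (?N n)) < a * real n" by (simp add: divide_less_eq mult.commute)
    show ?case
    proof (cases "?N n = 0")
      case False
      then have "real (?N n) = exp (ln (real (?N n)))" by simp
      also have "\<dots> \<le> exp (a * real n)" using ln_less by simp
      finally show ?thesis .
    qed simp
  qed
qed

lemma cover_entropy_le_0I:
  assumes sub: "\<And>a. a > 0 \<Longrightarrow>
    eventually (\<lambda>n. real (cover_num X (iter_join X T \<U> n)) \<le> exp (a * real n)) sequentially"
  shows "cover_entropy X T \<U> \<le> 0"
  unfolding cover_entropy_def
proof (rule Limsup_le_iff[THEN iffD2], intro allI impI)
  let ?N = "\<lambda>n. cover_num X (iter_join X T \<U> n)"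
  fix y :: ereal assume "y > 0"
  then consider a where "y = ereal a" "a > 0" | "y = \<infinity>" by (cases y) auto
  then show "eventually (\<lambda>n. ereal (ln (real (?N n)) / real n) < y) sequentially"
  proof cases
    case 1
    have "eventually (\<lambda>n. real (?N n) \<le> exp (a / 2 * real n)) sequentially"
      using sub[of "a/2"] \<open>a > 0\<close> by simp
    then show ?thesis
      using eventually_ge_at_top[of 1]
    proof eventually_elim
      case (elim n)
      then have "ln (real (?N n)) \<le> a / 2 * real n"
        using \<open>a > 0\<close> ln_le_cancel_iff[of "real (?N n)" "exp (a / 2 * real n)"]
        by (cases "?N n = 0") auto
      then have "ln (real (?N n)) / real n \<le> a / 2" using elim(2) by (simp add: divide_le_eq)
      then have "ln (real (?N n)) / real n < a" using \<open>a > 0\<close> by linarith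
      then show ?case using 1 by simp
    qed
  qed simp
qed

section \<open>Subexponential window complexity\<close>

text \<open>The symbolic counterpart of a subcover of the \<open>n\<close>-fold join of a cover of the spectrum.\<close>
definition window_net :: "seq \<Rightarrow> real \<Rightarrow> nat \<Rightarrow> seq set \<Rightarrow> bool" where
  "window_net h \<epsilon> n C \<longleftrightarrow> finite C \<and> (\<forall>m. \<exists>c\<in>C. \<forall>i<n. cmod (h (m + i) - c i) \<le> \<epsilon>)"

definition subexp_complexity :: "seq \<Rightarrow> bool" where
  "subexp_complexity h \<longleftrightarrow> (\<forall>\<epsilon>>0. \<forall>a>0. eventually
     (\<lambda>n. \<exists>C. window_net h \<epsilon> n C \<and> real (card C) \<le> exp (a * real n)) sequentially)"

lemma subexp_complexityD:
  "subexp_complexity h \<Longrightarrow> \<epsilon> > 0 \<Longrightarrow> a > 0 \<Longrightarrow>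
    eventually (\<lambda>n. \<exists>C. window_net h \<epsilon> n C \<and> real (card C) \<le> exp (a * real n)) sequentially"
  unfolding subexp_complexity_def by blast

lemma subexp_complexity_const: "subexp_complexity (\<lambda>_. c)"
  unfolding subexp_complexity_def window_net_def
  by (intro allI impI always_eventually exI[of _ "{\<lambda>_. c}"]) auto

lemma window_net_shift:
  assumes "window_net f \<epsilon> n C"
  shows "window_net (shift f) \<epsilon> n C"
  unfolding window_net_def
proof (intro conjI allI)
  fix m
  obtain c where "c \<in> C" "\<forall>i<n. cmod (f (Suc m + i) - c i) \<le> \<epsilon>"
    using assms unfolding window_net_def by blast
  then show "\<exists>c\<in>C. \<forall>i<n. cmod (shift f (m + i) - c i) \<le> \<epsilon>" by (auto simp: shift_def)
qed (use assms window_net_def in blast)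

lemma subexp_complexity_shift: "subexp_complexity f \<Longrightarrow> subexp_complexity (shift f)"
  unfolding subexp_complexity_def using window_net_shift by (blast intro: eventually_mono)

lemma window_net_perturb:
  assumes "window_net g \<delta> n C" "\<And>m. cmod (f m - g m) \<le> \<eta>"
  shows "window_net f (\<eta> + \<delta>) n C"
  unfolding window_net_def
proof (intro conjI allI)
  fix m
  obtain c where "c \<in> C" "\<forall>i<n. cmod (g (m + i) - c i) \<le> \<delta>"
    using assms(1) unfolding window_net_def by blast
  moreover have "cmod (f k - c i) \<le> cmod (f k - g k) + cmod (g k - c i)" for k i
    using norm_triangle_ineq[of "f k - g k" "g k - c i"] by simp
  ultimately show "\<exists>c\<in>C. \<forall>i<n. cmod (f (m + i) - c i) \<le> \<eta> + \<delta>"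
    using assms(2) by (meson add_mono order_trans)
qed (use assms window_net_def in blast)

lemma subexp_complexity_approx:
  assumes f: "f \<in> linf"
    and approx: "\<And>e. e > 0 \<Longrightarrow> \<exists>g\<in>linf. subexp_complexity g \<and> sup_norm (\<lambda>n. f n - g n) < e"
  shows "subexp_complexity f"
  unfolding subexp_complexity_def
proof (intro allI impI)
  fix \<epsilon> a :: real assume "\<epsilon> > 0" "a > 0"
  then obtain g where g: "g \<in> linf" "subexp_complexity g" "sup_norm (\<lambda>n. f n - g n) < \<epsilon>/2"
    using approx[of "\<epsilon>/2"] by auto
  have "cmod (f m - g m) \<le> \<epsilon>/2" for m
    using norm_diff_less_if_sup_norm_less[OF f g(1,3)] less_imp_le by blast
  then have "window_net f \<epsilon> n C" if "window_net g (\<epsilon>/2) n C" for n C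
    using window_net_perturb[OF that] by fastforce
  then show "eventually (\<lambda>n. \<exists>C. window_net f \<epsilon> n C \<and> real (card C) \<le> exp (a * real n)) sequentially"
    using subexp_complexityD[OF g(2) half_gt_zero[OF \<open>\<epsilon> > 0\<close>] \<open>a > 0\<close>]
    by (auto elim!: eventually_mono)
qed

text \<open>Nets for \<open>f\<close> and \<open>g\<close> combine into a net for \<open>p\<close> whose size is the product of
  their sizes.\<close>
lemma subexp_complexity_combine:
  assumes f: "subexp_complexity f" and g: "subexp_complexity g"
    and comb: "\<And>\<epsilon>. \<epsilon> > 0 \<Longrightarrow> \<exists>e>0. \<forall>n c d. cmod (f n - c) \<le> e \<longrightarrow> cmod (g n - d) \<le> e \<longrightarrow>
        cmod (p n - op c d) \<le> \<epsilon>"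
  shows "subexp_complexity p"
  unfolding subexp_complexity_def
proof (intro allI impI)
  fix \<epsilon> a :: real assume "\<epsilon> > 0" "a > 0"
  obtain e where e: "e > 0" "\<And>n c d. cmod (f n - c) \<le> e \<Longrightarrow> cmod (g n - d) \<le> e \<Longrightarrow>
      cmod (p n - op c d) \<le> \<epsilon>"
    using comb[OF \<open>\<epsilon> > 0\<close>] by blast
  show "eventually (\<lambda>n. \<exists>C. window_net p \<epsilon> n C \<and> real (card C) \<le> exp (a * real n)) sequentially"
    using eventually_conj[OF subexp_complexityD[OF f e(1) half_gt_zero] subexp_complexityD[OF g e(1)
          half_gt_zero], OF \<open>a > 0\<close> \<open>a > 0\<close>]
  proof eventually_elim
    case (elim n)
    then obtain C D where C: "window_net f e n C" "real (card C) \<le> exp (a/2 * real n)"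
      and D: "window_net g e n D" "real (card D) \<le> exp (a/2 * real n)" by blast
    define CD where "CD = (\<lambda>(c, d). \<lambda>i. op (c i) (d i)) ` (C \<times> D)"
    have "window_net p \<epsilon> n CD"
      unfolding window_net_def
    proof (intro conjI allI)
      show "finite CD" using C(1) D(1) by (simp add: CD_def window_net_def)
      fix m
      obtain c d where "c \<in> C" "d \<in> D" "\<forall>i<n. cmod (f (m + i) - c i) \<le> e"
        "\<forall>i<n. cmod (g (m + i) - d i) \<le> e"
        using C(1) D(1) unfolding window_net_def by meson
      then show "\<exists>cd\<in>CD. \<forall>i<n. cmod (p (m + i) - cd i) \<le> \<epsilon>"
        unfolding CD_def using e(2) by (intro bexI[of _ "\<lambda>i. op (c i) (d i)"]) auto
    qed
    moreover have "real (card CD) \<le> exp (a * real n)"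
    proof -
      have "card CD \<le> card C * card D"
        unfolding CD_def card_cartesian_product[symmetric] by (rule card_image_le)
          (use C(1) D(1) in \<open>simp add: window_net_def\<close>)
      then have "real (card CD) \<le> real (card C) * real (card D)" by (simp flip: of_nat_mult)
      also have "\<dots> \<le> exp (a/2 * real n) * exp (a/2 * real n)"
        using C(2) D(2) by (intro mult_mono) auto
      finally show ?thesis by (simp flip: exp_add)
    qed
    ultimately show ?case by blast
  qed
qed

lemma subexp_complexity_add:
  "subexp_complexity f \<Longrightarrow> subexp_complexity g \<Longrightarrow> subexp_complexity (\<lambda>n. f n + g n)"
proof (erule subexp_complexity_combine[where op = "(+)"])
  fix \<epsilon> :: real assume "\<epsilon> > 0"
  have "cmod (f n + g n - (c + d)) \<le> \<epsilon>" if "cmod (f n - c) \<le> \<epsilon>/2" "cmod (g n - d) \<le> \<epsilon>/2"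
    for n c d
    using norm_triangle_ineq[of "f n - c" "g n - d"] that by (simp add: algebra_simps)
  then show "\<exists>e>0. \<forall>n c d. cmod (f n - c) \<le> e \<longrightarrow> cmod (g n - d) \<le> e \<longrightarrow>
      cmod (f n + g n - (c + d)) \<le> \<epsilon>"
    using \<open>\<epsilon> > 0\<close> by (intro exI[of _ "\<epsilon>/2"]) auto
qed

lemma subexp_complexity_mult:
  assumes f: "f \<in> linf" "subexp_complexity f" and g: "g \<in> linf" "subexp_complexity g"
  shows "subexp_complexity (\<lambda>n. f n * g n)"
proof (rule subexp_complexity_combine[OF f(2) g(2), where op = "(*)"])
  fix \<epsilon> :: real assume "\<epsilon> > 0"
  obtain B where B: "\<And>n. cmod (f n) \<le> B" "\<And>n. cmod (g n) \<le> B" "B \<ge> 0"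
    using f(1) g(1) unfolding linf_iff
    by (metis (no_types, opaque_lifting) max.cobounded1 max.cobounded2 norm_ge_zero order_trans)
  define e where "e = min 1 (\<epsilon> / (2 * B + 1))"
  have "e \<le> \<epsilon> / (2 * B + 1)" unfolding e_def by simp
  then have e: "e > 0" "e \<le> 1" "e * (2 * B + 1) \<le> \<epsilon>"
    unfolding e_def using \<open>\<epsilon> > 0\<close> B(3) by (simp_all add: le_divide_eq)
  have "cmod (f n * g n - c * d) \<le> \<epsilon>" if "cmod (f n - c) \<le> e" "cmod (g n - d) \<le> e" for n c d
  proof -
    have "cmod d \<le> B + 1"
      using norm_triangle_ineq4[of "g n" "g n - d"] B(2)[of n] that(2) e(2) by simp
    have "f n * g n - c * d = f n * (g n - d) + d * (f n - c)" by (simp add: algebra_simps)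
    then have "cmod (f n * g n - c * d) \<le> cmod (f n) * cmod (g n - d) + cmod d * cmod (f n - c)"
      by (metis norm_mult norm_triangle_ineq)
    also have "\<dots> \<le> B * e + (B + 1) * e"
      using B(1)[of n] \<open>cmod d \<le> B + 1\<close> that B(3) by (intro add_mono mult_mono) auto
    finally show ?thesis using e(3) by (simp add: algebra_simps)
  qed
  then show "\<exists>e>0. \<forall>n c d. cmod (f n - c) \<le> e \<longrightarrow> cmod (g n - d) \<le> e \<longrightarrow>
      cmod (f n * g n - c * d) \<le> \<epsilon>"
    using e(1) by blast
qed

lemma subexp_complexity_scaleC:
  assumes f: "subexp_complexity f"
  shows "subexp_complexity (\<lambda>n. k * f n)"
proof (rule subexp_complexity_combine[OF f f, where op = "\<lambda>c d. k * c"])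
  fix \<epsilon> :: real assume "\<epsilon> > 0"
  define e where "e = \<epsilon> / (cmod k + 1)"
  have k: "0 < cmod k + 1" using norm_ge_zero[of k] by linarith
  then have "e > 0" unfolding e_def using \<open>\<epsilon> > 0\<close> by simp
  have "cmod k * e \<le> (cmod k + 1) * e" using \<open>e > 0\<close> by (simp add: mult_right_mono)
  also have "\<dots> = \<epsilon>" unfolding e_def using k by simp
  finally have "cmod k * e \<le> \<epsilon>" .
  note \<open>e > 0\<close> this
  moreover have "cmod (k * f n - k * c) \<le> cmod k * e" if "cmod (f n - c) \<le> e" for n c
    using that by (simp add: right_diff_distrib[symmetric] norm_mult mult_left_mono)
  ultimately show "\<exists>e>0. \<forall>n c d. cmod (f n - c) \<le> e \<longrightarrow> cmod (f n - d) \<le> e \<longrightarrow>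
      cmod (k * f n - k * c) \<le> \<epsilon>"
    by (meson order_trans)
qed

lemma subexp_complexity_cnj:
  assumes f: "subexp_complexity f"
  shows "subexp_complexity (\<lambda>n. cnj (f n))"
proof (rule subexp_complexity_combine[OF f f, where op = "\<lambda>c d. cnj c"])
  fix \<epsilon> :: real assume "\<epsilon> > 0"
  then show "\<exists>e>0. \<forall>n c d. cmod (f n - c) \<le> e \<longrightarrow> cmod (f n - d) \<le> e \<longrightarrow>
      cmod (cnj (f n) - cnj c) \<le> \<epsilon>"
    by (metis complex_cnj_diff complex_mod_cnj)
qed

text \<open>A window of \<open>p\<close> is determined by the windows of finitely many \<open>q \<in> F\<close> up to \<open>\<delta>/3\<close>:
  two positions matching the same net elements are \<open>2\<delta>/3\<close>-close in every \<open>q\<close>.\<close>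
lemma window_net_if_locally_determined:
  assumes fin: "finite F" and nets: "\<And>q. q \<in> F \<Longrightarrow> window_net q (\<delta>/3) n (CC q)" and "\<delta> > 0"
    and det: "\<And>m m'. (\<forall>q\<in>F. cmod (q m - q m') < \<delta>) \<Longrightarrow> p m = p m'"
  shows "\<exists>C. window_net p 0 n C \<and> card C \<le> (\<Prod>q\<in>F. card (CC q))"
proof -
  define good where "good = (\<lambda>t m. \<forall>q\<in>F. \<forall>i<n. cmod (q (m + i) - t q i) \<le> \<delta>/3)"
  define C where "C = (\<lambda>t i. p ((SOME m. good t m) + i)) ` PiE F CC"
  have fin_Pi: "finite (PiE F CC)" using fin nets by (intro finite_PiE) (auto simp: window_net_def)
  have windows: "\<exists>c\<in>C. \<forall>i<n. p (m + i) = c i" for m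
  proof -
    have "\<forall>q\<in>F. \<exists>c\<in>CC q. \<forall>i<n. cmod (q (m + i) - c i) \<le> \<delta>/3"
      using nets unfolding window_net_def by blast
    then obtain t where t: "\<And>q. q \<in> F \<Longrightarrow> t q \<in> CC q \<and> (\<forall>i<n. cmod (q (m + i) - t q i) \<le> \<delta>/3)"
      by metis
    let ?t = "restrict t F"
    have "good ?t m" unfolding good_def using t by simp
    then have m': "good ?t (SOME m. good ?t m)" by (rule someI)
    have "p (m + i) = p ((SOME m. good ?t m) + i)" if "i < n" for i
    proof (rule det, intro ballI)
      fix q assume q: "q \<in> F"
      let ?m' = "SOME m. good ?t m"
      have "cmod (q (m + i) - q (?m' + i)) \<le> cmod (q (m + i) - ?t q i) + cmod (q (?m' + i) - ?t q i)"
        using norm_triangle_ineq4[of "q (m + i) - ?t q i" "q (?m' + i) - ?t q i"] by simp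
      also have "\<dots> \<le> \<delta>/3 + \<delta>/3"
        using \<open>good ?t m\<close> m' q that unfolding good_def by (intro add_mono) blast+
      finally show "cmod (q (m + i) - q (?m' + i)) < \<delta>" using \<open>\<delta> > 0\<close> by simp
    qed
    moreover have "?t \<in> PiE F CC" using t by auto
    ultimately show ?thesis
      unfolding C_def by (intro bexI[where x = "(\<lambda>t i. p ((SOME m. good t m) + i)) ?t"]) auto
  qed
  moreover have "card C \<le> (\<Prod>q\<in>F. card (CC q))"
    unfolding C_def card_PiE[OF fin, symmetric] using fin_Pi by (rule card_image_le)
  moreover have "window_net p 0 n C"
    unfolding window_net_def using fin_Pi windows by (auto simp: C_def)
  ultimately show ?thesis by blast
qed

lemma subexp_complexity_if_locally_determined:
  assumes fin: "finite F" and sub: "\<And>q. q \<in> F \<Longrightarrow> subexp_complexity q" and "\<delta> > 0"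
    and det: "\<And>m m'. (\<forall>q\<in>F. cmod (q m - q m') < \<delta>) \<Longrightarrow> p m = p m'"
  shows "subexp_complexity p"
  unfolding subexp_complexity_def
proof (intro allI impI)
  fix \<epsilon> a :: real assume "\<epsilon> > 0" "a > 0"
  define b where "b = a / (real (card F) + 1)"
  have "b > 0" "real (card F) * b \<le> a" unfolding b_def using \<open>a > 0\<close> by (auto simp: field_simps)
  have "eventually (\<lambda>n. \<forall>q\<in>F. \<exists>C. window_net q (\<delta>/3) n C \<and> real (card C) \<le> exp (b * real n))
      sequentially"
    using fin sub \<open>\<delta> > 0\<close> \<open>b > 0\<close> by (intro eventually_ball_finite ballI subexp_complexityD) auto
  then show "eventually (\<lambda>n. \<exists>C. window_net p \<epsilon> n C \<and> real (card C) \<le> exp (a * real n)) sequentially"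
  proof eventually_elim
    case (elim n)
    then obtain CC where CC: "\<And>q. q \<in> F \<Longrightarrow> window_net q (\<delta>/3) n (CC q) \<and> real (card (CC q)) \<le> exp (b * real n)"
      by metis
    then obtain C where C: "window_net p 0 n C" "card C \<le> (\<Prod>q\<in>F. card (CC q))"
      using window_net_if_locally_determined[where p = p, OF fin _ \<open>\<delta> > 0\<close> det] by blast
    have net: "window_net p \<epsilon> n C" using window_net_perturb[OF C(1), of p \<epsilon>] \<open>\<epsilon> > 0\<close> by simp
    have "real (card C) \<le> (\<Prod>q\<in>F. real (card (CC q)))"
      using C(2) by (simp flip: of_nat_prod)
    also have "\<dots> \<le> (\<Prod>q\<in>F. exp (b * real n))" using CC by (intro prod_mono) auto
    also have "\<dots> = exp (real (card F) * (b * real n))" by (simp add: exp_of_nat_mult)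
    also have "\<dots> \<le> exp (a * real n)"
      using \<open>real (card F) * b \<le> a\<close> by (simp add: mult.assoc[symmetric] mult_right_mono)
    finally show ?case using net by blast
  qed
qed

section \<open>Zero entropy and window complexity\<close>

text \<open>Each member of an \<open>n\<close>-fold join of the cover by the sets \<open>{\<sigma>. cmod (\<sigma> k - c) < \<epsilon>}\<close> is
  labelled by the centres \<open>c\<close> it uses; these labels form a window net for \<open>k\<close>, because the
  \<open>i\<close>-th iterate of a point evaluation at \<open>m\<close> evaluates \<open>k\<close> at \<open>m + i\<close>.\<close>
lemma window_net_if_join_cover:
  assumes A: "is_anqie A" and k: "k \<in> A"
    and \<V>: "\<V> \<subseteq> iter_join (weakstar A) (anqie_map A) (range (\<lambda>c. weakstar_ball A {k} \<epsilon> (\<lambda>_. c))) n"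
      "finite \<V>" "\<Union>\<V> = characters A"
  shows "\<exists>C. window_net k \<epsilon> n C \<and> card C \<le> card \<V>"
proof -
  let ?U = "\<lambda>c. weakstar_ball A {k} \<epsilon> (\<lambda>_. c)"
  have "\<forall>W\<in>\<V>. \<exists>c. W = characters A \<inter> (\<Inter>i<n. (anqie_map A ^^ i) -` ?U (c i))"
  proof
    fix W assume "W \<in> \<V>"
    then obtain U where U: "W = characters A \<inter> (\<Inter>i<n. (anqie_map A ^^ i) -` U i)"
      "\<forall>i<n. U i \<in> range ?U"
      using \<V>(1) unfolding iter_join_def by auto
    then have "\<forall>i. \<exists>c. i < n \<longrightarrow> U i = ?U c" by blast
    then obtain c where "\<And>i. i < n \<Longrightarrow> U i = ?U (c i)" by metis
    with U(1) show "\<exists>c. W = characters A \<inter> (\<Inter>i<n. (anqie_map A ^^ i) -` ?U (c i))"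
      by (intro exI[of _ c]) auto
  qed
  then obtain c where "\<forall>W\<in>\<V>. W = characters A \<inter> (\<Inter>i<n. (anqie_map A ^^ i) -` ?U (c W i))"
    by (rule bchoice[THEN exE])
  then have c: "\<And>W. W \<in> \<V> \<Longrightarrow> W = characters A \<inter> (\<Inter>i<n. (anqie_map A ^^ i) -` ?U (c W i))"
    by blast
  have "window_net k \<epsilon> n (c ` \<V>)"
    unfolding window_net_def
  proof (intro conjI allI)
    fix m
    have "point_eval A m \<in> \<Union>\<V>" using \<V>(3) point_eval_character[OF A] by simp
    then obtain W where W: "W \<in> \<V>" "point_eval A m \<in> W" by blast
    have "cmod (k (m + i) - c W i) \<le> \<epsilon>" if "i < n" for i
    proof -
      have "(anqie_map A ^^ i) (point_eval A m) \<in> ?U (c W i)" using c[OF W(1)] W(2) that by blast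
      then show ?thesis using funpow_anqie_map_point_eval[OF A k] by (simp add: weakstar_ball_def)
    qed
    then show "\<exists>c'\<in>c ` \<V>. \<forall>i<n. cmod (k (m + i) - c' i) \<le> \<epsilon>" using W(1) by blast
  qed (use \<V>(2) in simp)
  moreover have "card (c ` \<V>) \<le> card \<V>" using \<V>(2) by (rule card_image_le)
  ultimately show ?thesis by blast
qed

lemma subexp_complexity_if_AE_anqie_le_0:
  assumes A: "is_anqie A" and ent: "AE_anqie A \<le> 0" and k: "k \<in> A"
  shows "subexp_complexity k"
  unfolding subexp_complexity_def
proof (intro allI impI)
  fix \<epsilon> a :: real assume "\<epsilon> > 0" "a > 0"
  let ?X = "weakstar A" and ?T = "anqie_map A"
  define \<U> where "\<U> = range (\<lambda>c. weakstar_ball A {k} \<epsilon> (\<lambda>_. c))"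
  have opn: "\<And>U. U \<in> \<U> \<Longrightarrow> openin ?X U" unfolding \<U>_def using openin_weakstar_ball by blast
  have cov: "\<Union>\<U> = topspace ?X"
  proof
    show "\<Union>\<U> \<subseteq> topspace ?X" unfolding \<U>_def by (auto simp: weakstar_ball_def)
    show "topspace ?X \<subseteq> \<Union>\<U>"
    proof
      fix \<sigma> assume "\<sigma> \<in> topspace ?X"
      then have "\<sigma> \<in> weakstar_ball A {k} \<epsilon> (\<lambda>_. \<sigma> k)" using \<open>\<epsilon> > 0\<close> by (simp add: weakstar_ball_def)
      then show "\<sigma> \<in> \<Union>\<U>" unfolding \<U>_def by blast
    qed
  qed
  have "cover_entropy ?X ?T \<U> \<le> 0"
    using cover_entropy_le_top_entropy[of ?X \<U> ?T] opn cov ent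
    unfolding open_cover_def AE_anqie_def by auto
  then have "eventually (\<lambda>n. real (cover_num ?X (iter_join ?X ?T \<U> n)) \<le> exp (a * real n)) sequentially"
    using \<open>a > 0\<close> by (rule eventually_cover_num_le_exp)
  then show "eventually (\<lambda>n. \<exists>C. window_net k \<epsilon> n C \<and> real (card C) \<le> exp (a * real n)) sequentially"
  proof eventually_elim
    case (elim n)
    have "\<exists>\<V>. \<V> \<subseteq> iter_join ?X ?T \<U> n \<and> finite \<V> \<and> \<Union>\<V> = topspace ?X"
      using compact_space_weakstar[OF A] opn cov funpow_anqie_map_character[OF A]
      by (intro iter_join_finite_cover) auto
    from cover_num_attained[OF this] obtain \<V> where \<V>: "\<V> \<subseteq> iter_join ?X ?T \<U> n"
      "finite \<V>" "\<Union>\<V> = topspace ?X" "card \<V> = cover_num ?X (iter_join ?X ?T \<U> n)"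
      by (elim exE conjE) (rule that)
    obtain C where "window_net k \<epsilon> n C" "card C \<le> card \<V>"
      using window_net_if_join_cover[OF A k \<V>(1)[unfolded \<U>_def] \<V>(2) \<V>(3)[unfolded topspace_weakstar]]
      by blast
    with elim \<V>(4) show ?case by (intro exI[of _ C]) auto
  qed
qed

text \<open>Point evaluations are weak* dense: otherwise \<open>\<Sum>i<N. \<bar>Q i - \<tau> (Q i)\<bar>\<^sup>2\<close> would be
  bounded away from \<open>0\<close> while \<open>\<tau>\<close> vanishes on it.\<close>
lemma point_eval_approx_character:
  fixes N :: nat
  assumes A: "is_anqie A" and \<tau>: "\<tau> \<in> characters A" and Q: "\<And>i. i < N \<Longrightarrow> Q i \<in> A" and "d > 0"
  shows "\<exists>m. \<forall>i<N. cmod (Q i m - \<tau> (Q i)) < d"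
proof (rule ccontr)
  assume "\<not> ?thesis"
  then have far: "\<forall>m. \<exists>i<N. d \<le> cmod (Q i m - \<tau> (Q i))" by (auto simp: not_less)
  define D where "D = (\<lambda>i m. Q i m - \<tau> (Q i))"
  have D: "(\<lambda>m. D i m) \<in> A" if "i < N" for i
    unfolding D_def by (rule anqie_diff[OF A Q[OF that] anqie_const[OF A]])
  have DD: "(\<lambda>m. D i m * cnj (D i m)) \<in> A" if "i < N" for i
    by (rule anqie_mult[OF A D[OF that] anqie_cnj[OF A D[OF that]]])
  define b where "b = (\<lambda>m. \<Sum>i<N. D i m * cnj (D i m))"
  have b: "b \<in> A" unfolding b_def by (rule anqie_sum[OF A DD])
  have "\<tau> (\<lambda>m. D i m * cnj (D i m)) = 0" if "i < N" for i
  proof -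
    have "\<tau> (\<lambda>m. D i m) = 0"
      unfolding D_def using character_diff[OF \<tau> A Q[OF that] anqie_const[OF A]] character_const[OF \<tau> A]
      by simp
    then show ?thesis using character_mult[OF \<tau> D[OF that] anqie_cnj[OF A D[OF that]]] by simp
  qed
  moreover have "\<tau> b = (\<Sum>i<N. \<tau> (\<lambda>m. D i m * cnj (D i m)))"
    unfolding b_def by (rule character_sum[OF \<tau> A DD])
  ultimately have "\<tau> b = 0" by simp
  moreover have "\<tau> b \<noteq> 0"
  proof (rule character_ne_if_bounded_away[OF \<tau> A b])
    show "0 < d\<^sup>2" using \<open>d > 0\<close> by simp
    fix m
    obtain i where i: "i < N" "d \<le> cmod (D i m)" using far unfolding D_def by blast
    have "b m = complex_of_real (\<Sum>i<N. (cmod (D i m))\<^sup>2)"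
      unfolding b_def of_real_sum complex_norm_square by simp
    then have "cmod (b m - 0) = \<bar>\<Sum>i<N. (cmod (D i m))\<^sup>2\<bar>" by (simp only: diff_zero norm_of_real)
    then have "cmod (b m - 0) = (\<Sum>i<N. (cmod (D i m))\<^sup>2)" by (simp add: sum_nonneg)
    moreover have "d\<^sup>2 \<le> (cmod (D i m))\<^sup>2" using i \<open>d > 0\<close> by (intro power_mono) auto
    moreover have "(cmod (D i m))\<^sup>2 \<le> (\<Sum>i<N. (cmod (D i m))\<^sup>2)"
      using i by (intro member_le_sum) auto
    ultimately show "d\<^sup>2 \<le> cmod (b m - 0)" by linarith
  qed
  ultimately show False by simp
qed

lemma character_near_window_net:
  assumes A: "is_anqie A" and h: "h \<in> A" and \<tau>: "\<tau> \<in> characters A"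
    and net: "window_net h \<epsilon> N C" and "\<epsilon> < \<delta>"
  shows "\<exists>c\<in>C. \<forall>i<N. cmod (\<tau> ((shift ^^ i) h) - c i) < \<delta>"
proof -
  have "\<exists>m. \<forall>i<N. cmod ((shift ^^ i) h m - \<tau> ((shift ^^ i) h)) < \<delta> - \<epsilon>"
    by (rule point_eval_approx_character[OF A \<tau>]) (use \<open>\<epsilon> < \<delta>\<close> anqie_funpow_shift[OF A h] in auto)
  then obtain m where m: "\<forall>i<N. cmod ((shift ^^ i) h m - \<tau> ((shift ^^ i) h)) < \<delta> - \<epsilon>" ..
  obtain c where c: "c \<in> C" "\<forall>i<N. cmod (h (m + i) - c i) \<le> \<epsilon>"
    using net unfolding window_net_def by blast
  have "cmod (\<tau> ((shift ^^ i) h) - c i) < \<delta>" if "i < N" for i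
    using m c(2) that norm_triangle_ineq4[of "h (m + i) - c i" "(shift ^^ i) h m - \<tau> ((shift ^^ i) h)"]
    by (fastforce simp: funpow_shift_apply)
  then show ?thesis using c(1) by blast
qed

definition window_close :: "seq \<Rightarrow> nat \<Rightarrow> real \<Rightarrow> (seq \<Rightarrow> complex) \<Rightarrow> (seq \<Rightarrow> complex) \<Rightarrow> bool" where
  "window_close h L \<eta> \<sigma> \<tau> \<longleftrightarrow> (\<forall>i<L. cmod (\<sigma> ((shift ^^ i) h) - \<tau> ((shift ^^ i) h)) < \<eta>)"

definition window_controlled :: "seq \<Rightarrow> seq set \<Rightarrow> seq \<Rightarrow> bool" where
  "window_controlled h A q \<longleftrightarrow> (\<forall>\<epsilon>>0. \<exists>L \<eta>. \<eta> > 0 \<and>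
     (\<forall>\<sigma>\<in>characters A. \<forall>\<tau>\<in>characters A. window_close h L \<eta> \<sigma> \<tau> \<longrightarrow> cmod (\<sigma> q - \<tau> q) < \<epsilon>))"

lemma window_close_mono:
  "window_close h L \<eta> \<sigma> \<tau> \<Longrightarrow> L' \<le> L \<Longrightarrow> \<eta> \<le> \<eta>' \<Longrightarrow> window_close h L' \<eta>' \<sigma> \<tau>"
  unfolding window_close_def by (meson order_less_le_trans)

lemma window_controlledD:
  "window_controlled h A q \<Longrightarrow> \<epsilon> > 0 \<Longrightarrow> \<exists>L \<eta>. \<eta> > 0 \<and>
     (\<forall>\<sigma>\<in>characters A. \<forall>\<tau>\<in>characters A. window_close h L \<eta> \<sigma> \<tau> \<longrightarrow> cmod (\<sigma> q - \<tau> q) < \<epsilon>)"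
  unfolding window_controlled_def by blast

lemma window_controlled_self: "window_controlled h A h"
  unfolding window_controlled_def
proof (intro allI impI)
  fix \<epsilon> :: real assume "\<epsilon> > 0"
  then show "\<exists>L \<eta>. \<eta> > 0 \<and> (\<forall>\<sigma>\<in>characters A. \<forall>\<tau>\<in>characters A.
      window_close h L \<eta> \<sigma> \<tau> \<longrightarrow> cmod (\<sigma> h - \<tau> h) < \<epsilon>)"
    by (intro exI[of _ 1] exI[of _ \<epsilon>]) (auto simp: window_close_def)
qed

lemma window_controlled_Lipschitz:
  assumes f: "window_controlled h A f" and g: "window_controlled h A g" and "0 \<le> K"
    and Lip: "\<And>\<sigma> \<tau>. \<sigma> \<in> characters A \<Longrightarrow> \<tau> \<in> characters A \<Longrightarrow>
      cmod (\<sigma> p - \<tau> p) \<le> K * (cmod (\<sigma> f - \<tau> f) + cmod (\<sigma> g - \<tau> g))"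
  shows "window_controlled h A p"
  unfolding window_controlled_def
proof (intro allI impI)
  fix \<epsilon> :: real assume "\<epsilon> > 0"
  define e where "e = \<epsilon> / (2 * K + 1)"
  have "2 * K + 1 > 0" using \<open>0 \<le> K\<close> by simp
  then have "e > 0" unfolding e_def using \<open>\<epsilon> > 0\<close> by simp
  have "K * (e + e) < (2 * K + 1) * e" using \<open>e > 0\<close> by (simp add: algebra_simps)
  also have "\<dots> = \<epsilon>" unfolding e_def using \<open>2 * K + 1 > 0\<close> by simp
  finally have "K * (e + e) < \<epsilon>" .
  obtain L1 \<eta>1 L2 \<eta>2 where "\<eta>1 > 0" "\<eta>2 > 0"
    and L1: "\<forall>\<sigma>\<in>characters A. \<forall>\<tau>\<in>characters A. window_close h L1 \<eta>1 \<sigma> \<tau> \<longrightarrow> cmod (\<sigma> f - \<tau> f) < e"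
    and L2: "\<forall>\<sigma>\<in>characters A. \<forall>\<tau>\<in>characters A. window_close h L2 \<eta>2 \<sigma> \<tau> \<longrightarrow> cmod (\<sigma> g - \<tau> g) < e"
    using window_controlledD[OF f \<open>e > 0\<close>] window_controlledD[OF g \<open>e > 0\<close>] by blast
  have "cmod (\<sigma> p - \<tau> p) < \<epsilon>"
    if "\<sigma> \<in> characters A" "\<tau> \<in> characters A" "window_close h (max L1 L2) (min \<eta>1 \<eta>2) \<sigma> \<tau>" for \<sigma> \<tau>
  proof -
    have "cmod (\<sigma> f - \<tau> f) < e" "cmod (\<sigma> g - \<tau> g) < e"
      using L1 L2 that window_close_mono[OF that(3)] by auto
    then have "K * (cmod (\<sigma> f - \<tau> f) + cmod (\<sigma> g - \<tau> g)) \<le> K * (e + e)"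
      using \<open>0 \<le> K\<close> by (intro mult_left_mono) auto
    then show ?thesis using Lip[OF that(1,2)] \<open>K * (e + e) < \<epsilon>\<close> by linarith
  qed
  then show "\<exists>L \<eta>. \<eta> > 0 \<and> (\<forall>\<sigma>\<in>characters A. \<forall>\<tau>\<in>characters A.
      window_close h L \<eta> \<sigma> \<tau> \<longrightarrow> cmod (\<sigma> p - \<tau> p) < \<epsilon>)"
    using \<open>\<eta>1 > 0\<close> \<open>\<eta>2 > 0\<close> by (intro exI[of _ "max L1 L2"] exI[of _ "min \<eta>1 \<eta>2"]) auto
qed

text \<open>The induced map shifts windows: \<open>anqie_map A \<sigma>\<close> sees at position \<open>i\<close> what \<open>\<sigma>\<close> sees
  at position \<open>i + 1\<close>.\<close>
lemma window_controlled_shift: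
  assumes A: "is_anqie A" and h: "h \<in> A" and f: "f \<in> A" and ctrl: "window_controlled h A f"
  shows "window_controlled h A (shift f)"
  unfolding window_controlled_def
proof (intro allI impI)
  fix \<epsilon> :: real assume "\<epsilon> > 0"
  then obtain L \<eta> where "\<eta> > 0" and L: "\<forall>\<sigma>\<in>characters A. \<forall>\<tau>\<in>characters A.
      window_close h L \<eta> \<sigma> \<tau> \<longrightarrow> cmod (\<sigma> f - \<tau> f) < \<epsilon>"
    using window_controlledD[OF ctrl] by blast
  have map_eval: "anqie_map A \<rho> g = \<rho> (shift g)" if "g \<in> A" for \<rho> g
    using that by (simp add: anqie_map_def)
  have "cmod (\<sigma> (shift f) - \<tau> (shift f)) < \<epsilon>"
    if \<sigma>: "\<sigma> \<in> characters A" and \<tau>: "\<tau> \<in> characters A" and close: "window_close h (Suc L) \<eta> \<sigma> \<tau>"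
    for \<sigma> \<tau>
  proof -
    have "window_close h L \<eta> (anqie_map A \<sigma>) (anqie_map A \<tau>)"
      unfolding window_close_def
    proof (intro allI impI)
      fix i assume "i < L"
      then have "cmod (\<sigma> ((shift ^^ Suc i) h) - \<tau> ((shift ^^ Suc i) h)) < \<eta>"
        using close unfolding window_close_def by blast
      then show "cmod (anqie_map A \<sigma> ((shift ^^ i) h) - anqie_map A \<tau> ((shift ^^ i) h)) < \<eta>"
        using map_eval[OF anqie_funpow_shift[OF A h]] by simp
    qed
    then have "cmod (anqie_map A \<sigma> f - anqie_map A \<tau> f) < \<epsilon>"
      using L anqie_map_character[OF A \<sigma>] anqie_map_character[OF A \<tau>] by blast
    then show ?thesis by (simp add: map_eval[OF f])
  qed
  then show "\<exists>L \<eta>. \<eta> > 0 \<and> (\<forall>\<sigma>\<in>characters A. \<forall>\<tau>\<in>characters A.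
      window_close h L \<eta> \<sigma> \<tau> \<longrightarrow> cmod (\<sigma> (shift f) - \<tau> (shift f)) < \<epsilon>)"
    using \<open>\<eta> > 0\<close> by blast
qed

lemma window_controlled_limit:
  assumes A: "is_anqie A" and f: "f \<in> A"
    and approx: "\<And>e. e > 0 \<Longrightarrow> \<exists>g\<in>A. window_controlled h A g \<and> sup_norm (\<lambda>n. f n - g n) < e"
  shows "window_controlled h A f"
  unfolding window_controlled_def
proof (intro allI impI)
  fix \<epsilon> :: real assume "\<epsilon> > 0"
  then obtain g where g: "g \<in> A" "window_controlled h A g" "sup_norm (\<lambda>n. f n - g n) < \<epsilon>/3"
    using approx[of "\<epsilon>/3"] by auto
  have "\<epsilon>/3 > 0" using \<open>\<epsilon> > 0\<close> by simp
  then obtain L \<eta> where "\<eta> > 0" and L: "\<forall>\<sigma>\<in>characters A. \<forall>\<tau>\<in>characters A.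
      window_close h L \<eta> \<sigma> \<tau> \<longrightarrow> cmod (\<sigma> g - \<tau> g) < \<epsilon>/3"
    using window_controlledD[OF g(2)] by blast
  have near: "cmod (\<rho> f - \<rho> g) < \<epsilon>/3" if "\<rho> \<in> characters A" for \<rho>
    using norm_character_le_sup_norm[OF that A anqie_diff[OF A f g(1)]] g(3)
      character_diff[OF that A f g(1)] by simp
  have "cmod (\<sigma> f - \<tau> f) < \<epsilon>"
    if "\<sigma> \<in> characters A" "\<tau> \<in> characters A" "window_close h L \<eta> \<sigma> \<tau>" for \<sigma> \<tau>
  proof -
    have "\<sigma> f - \<tau> f = ((\<sigma> f - \<sigma> g) + (\<sigma> g - \<tau> g)) - (\<tau> f - \<tau> g)" by simp
    then have "cmod (\<sigma> f - \<tau> f) \<le> cmod ((\<sigma> f - \<sigma> g) + (\<sigma> g - \<tau> g)) + cmod (\<tau> f - \<tau> g)"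
      by (metis norm_triangle_ineq4)
    then have "cmod (\<sigma> f - \<tau> f) \<le> cmod (\<sigma> f - \<sigma> g) + cmod (\<sigma> g - \<tau> g) + cmod (\<tau> f - \<tau> g)"
      using norm_triangle_ineq[of "\<sigma> f - \<sigma> g" "\<sigma> g - \<tau> g"] by linarith
    then show ?thesis using near[OF that(1)] near[OF that(2)] L that by fastforce
  qed
  then show "\<exists>L \<eta>. \<eta> > 0 \<and> (\<forall>\<sigma>\<in>characters A. \<forall>\<tau>\<in>characters A.
      window_close h L \<eta> \<sigma> \<tau> \<longrightarrow> cmod (\<sigma> f - \<tau> f) < \<epsilon>)"
    using \<open>\<eta> > 0\<close> by blast
qed

lemma window_controlled_one: "window_controlled h A (\<lambda>_. 1)"
proof (rule window_controlled_Lipschitz[OF window_controlled_self window_controlled_self order_refl])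
  fix \<sigma> \<tau> assume "\<sigma> \<in> characters A" "\<tau> \<in> characters A"
  then show "cmod (\<sigma> (\<lambda>_. 1) - \<tau> (\<lambda>_. 1)) \<le> 0 * (cmod (\<sigma> h - \<tau> h) + cmod (\<sigma> h - \<tau> h))"
    using character_one[of \<sigma>] character_one[of \<tau>] by simp
qed

lemma window_controlled_add:
  assumes "f \<in> A" "g \<in> A" "window_controlled h A f" "window_controlled h A g"
  shows "window_controlled h A (\<lambda>n. f n + g n)"
proof (rule window_controlled_Lipschitz[OF assms(3,4), of 1])
  fix \<sigma> \<tau> assume "\<sigma> \<in> characters A" "\<tau> \<in> characters A"
  then show "cmod (\<sigma> (\<lambda>n. f n + g n) - \<tau> (\<lambda>n. f n + g n)) \<le> 1 * (cmod (\<sigma> f - \<tau> f) + cmod (\<sigma> g - \<tau> g))"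
    using character_add[OF _ assms(1,2)] norm_triangle_ineq[of "\<sigma> f - \<tau> f" "\<sigma> g - \<tau> g"]
    by (simp add: algebra_simps)
qed simp

lemma window_controlled_mult:
  assumes A: "is_anqie A" and f: "f \<in> A" "window_controlled h A f" and g: "g \<in> A" "window_controlled h A g"
  shows "window_controlled h A (\<lambda>n. f n * g n)"
proof (rule window_controlled_Lipschitz[OF f(2) g(2), of "sup_norm f + sup_norm g"])
  have nonneg: "0 \<le> sup_norm f" "0 \<le> sup_norm g"
    using sup_norm_nonneg anqie_subset_linf[OF A] f(1) g(1) by blast+
  then show "0 \<le> sup_norm f + sup_norm g" by simp
  fix \<sigma> \<tau> assume \<sigma>: "\<sigma> \<in> characters A" and \<tau>: "\<tau> \<in> characters A"
  have "\<sigma> (\<lambda>n. f n * g n) - \<tau> (\<lambda>n. f n * g n) = \<sigma> f * (\<sigma> g - \<tau> g) + \<tau> g * (\<sigma> f - \<tau> f)"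
    using character_mult[OF \<sigma> f(1) g(1)] character_mult[OF \<tau> f(1) g(1)] by (simp add: algebra_simps)
  then have "cmod (\<sigma> (\<lambda>n. f n * g n) - \<tau> (\<lambda>n. f n * g n))
      \<le> cmod (\<sigma> f) * cmod (\<sigma> g - \<tau> g) + cmod (\<tau> g) * cmod (\<sigma> f - \<tau> f)"
    by (metis norm_mult norm_triangle_ineq)
  also have "\<dots> \<le> (sup_norm f + sup_norm g) * cmod (\<sigma> g - \<tau> g) + (sup_norm f + sup_norm g) * cmod (\<sigma> f - \<tau> f)"
    using norm_character_le_sup_norm[OF \<sigma> A f(1)] norm_character_le_sup_norm[OF \<tau> A g(1)] nonneg
    by (intro add_mono mult_right_mono) auto
  finally show "cmod (\<sigma> (\<lambda>n. f n * g n) - \<tau> (\<lambda>n. f n * g n))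
      \<le> (sup_norm f + sup_norm g) * (cmod (\<sigma> f - \<tau> f) + cmod (\<sigma> g - \<tau> g))"
    by (simp add: algebra_simps)
qed

lemma window_controlled_scaleC:
  assumes "f \<in> A" "window_controlled h A f"
  shows "window_controlled h A (\<lambda>n. c * f n)"
proof (rule window_controlled_Lipschitz[OF assms(2,2), of "cmod c"])
  fix \<sigma> \<tau> assume \<sigma>: "\<sigma> \<in> characters A" and \<tau>: "\<tau> \<in> characters A"
  have "cmod (\<sigma> (\<lambda>n. c * f n) - \<tau> (\<lambda>n. c * f n)) = cmod c * cmod (\<sigma> f - \<tau> f)"
    using character_scaleC[OF \<sigma> assms(1)] character_scaleC[OF \<tau> assms(1)]
    by (simp add: right_diff_distrib[symmetric] norm_mult)
  then show "cmod (\<sigma> (\<lambda>n. c * f n) - \<tau> (\<lambda>n. c * f n)) \<le> cmod c * (cmod (\<sigma> f - \<tau> f) + cmod (\<sigma> f - \<tau> f))"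
    by (simp add: mult_left_mono)
qed simp

lemma window_controlled_cnj:
  assumes A: "is_anqie A" and "f \<in> A" "window_controlled h A f"
  shows "window_controlled h A (\<lambda>n. cnj (f n))"
proof (rule window_controlled_Lipschitz[OF assms(3,3), of 1])
  fix \<sigma> \<tau> assume "\<sigma> \<in> characters A" "\<tau> \<in> characters A"
  then show "cmod (\<sigma> (\<lambda>n. cnj (f n)) - \<tau> (\<lambda>n. cnj (f n))) \<le> 1 * (cmod (\<sigma> f - \<tau> f) + cmod (\<sigma> f - \<tau> f))"
    using character_cnj[OF _ A assms(2)] by (metis complex_cnj_diff complex_mod_cnj mult_1 le_add_same_cancel1 norm_ge_zero)
qed simp

text \<open>The window-controlled elements of \<open>anqie_gen h\<close> form an anqie containing \<open>h\<close>.\<close>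
lemma window_controlled_anqie_gen:
  assumes h: "h \<in> linf" and q: "q \<in> anqie_gen h"
  shows "window_controlled h (anqie_gen h) q"
proof -
  let ?A = "anqie_gen h"
  note A = is_anqie_anqie_gen[OF h] and hA = anqie_gen_in[OF h]
  define M where "M = {q \<in> ?A. window_controlled h ?A q}"
  have "is_anqie M"
    unfolding is_anqie_def
  proof (intro conjI ballI allI impI)
    show "M \<subseteq> linf" using anqie_subset_linf[OF A] unfolding M_def by blast
    show "(\<lambda>_. 1) \<in> M" unfolding M_def using anqie_one[OF A] window_controlled_one by blast
    show "shift ` M \<subseteq> M"
      unfolding M_def using window_controlled_shift[OF A hA] anqie_shift[OF A] by blast
  next
    fix f g assume "f \<in> M" "g \<in> M"
    then show "(\<lambda>n. f n + g n) \<in> M" "(\<lambda>n. f n * g n) \<in> M"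
      unfolding M_def using anqie_add[OF A] anqie_mult[OF A] window_controlled_add
        window_controlled_mult[OF A] by auto
  next
    fix c f assume "f \<in> M"
    then show "(\<lambda>n. c * f n) \<in> M" "(\<lambda>n. cnj (f n)) \<in> M"
      unfolding M_def using anqie_scaleC[OF A] anqie_cnj[OF A] window_controlled_scaleC
        window_controlled_cnj[OF A] by auto
  next
    fix f assume f: "f \<in> linf" "\<forall>e>0. \<exists>g\<in>M. sup_norm (\<lambda>n. f n - g n) < e"
    then have "f \<in> ?A" using anqie_closed[OF A] unfolding M_def by blast
    moreover have "window_controlled h ?A f"
      using f(2) unfolding M_def by (intro window_controlled_limit[OF A \<open>f \<in> ?A\<close>]) blast
    ultimately show "f \<in> M" unfolding M_def by blast
  qed
  moreover have "h \<in> M" unfolding M_def using hA window_controlled_self by blast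
  ultimately have "?A \<subseteq> M" by (rule anqie_gen_least[OF h])
  then show ?thesis using q unfolding M_def by blast
qed

lemma window_close_imp_weakstar_ball:
  assumes h: "h \<in> linf" and F: "finite F" "F \<subseteq> anqie_gen h" and "r > 0"
  shows "\<exists>L \<eta>. \<eta> > 0 \<and> (\<forall>\<sigma>\<in>characters (anqie_gen h). \<forall>\<tau>\<in>characters (anqie_gen h).
     window_close h L \<eta> \<tau> \<sigma> \<longrightarrow> \<tau> \<in> weakstar_ball (anqie_gen h) F r \<sigma>)"
  using F
proof (induction F rule: finite_induct)
  case empty
  show ?case unfolding weakstar_ball_def by (intro exI[of _ 0] exI[of _ 1]) auto
next
  case (insert q F)
  then obtain L1 \<eta>1 where "\<eta>1 > 0" and L1: "\<forall>\<sigma>\<in>characters (anqie_gen h). \<forall>\<tau>\<in>characters (anqie_gen h).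
      window_close h L1 \<eta>1 \<tau> \<sigma> \<longrightarrow> \<tau> \<in> weakstar_ball (anqie_gen h) F r \<sigma>"
    by auto
  obtain L2 \<eta>2 where "\<eta>2 > 0" and L2: "\<forall>\<sigma>\<in>characters (anqie_gen h). \<forall>\<tau>\<in>characters (anqie_gen h).
      window_close h L2 \<eta>2 \<sigma> \<tau> \<longrightarrow> cmod (\<sigma> q - \<tau> q) < r"
    using window_controlledD[OF window_controlled_anqie_gen[OF h] \<open>r > 0\<close>, of q] insert.prems by auto
  have "\<tau> \<in> weakstar_ball (anqie_gen h) (insert q F) r \<sigma>"
    if "\<sigma> \<in> characters (anqie_gen h)" "\<tau> \<in> characters (anqie_gen h)"
      "window_close h (max L1 L2) (min \<eta>1 \<eta>2) \<tau> \<sigma>" for \<sigma> \<tau>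
    using L1 L2 that window_close_mono[OF that(3)] unfolding weakstar_ball_def by auto
  then show ?case using \<open>\<eta>1 > 0\<close> \<open>\<eta>2 > 0\<close> by (intro exI[of _ "max L1 L2"] exI[of _ "min \<eta>1 \<eta>2"]) auto
qed

lemma window_close_funpow_anqie_map:
  assumes A: "is_anqie A" and h: "h \<in> A" and "j < n"
    and \<sigma>: "\<forall>i<n + L. cmod (\<sigma> ((shift ^^ i) h) - c i) < \<eta>/2"
    and \<tau>: "\<forall>i<n + L. cmod (\<tau> ((shift ^^ i) h) - c i) < \<eta>/2"
  shows "window_close h L \<eta> ((anqie_map A ^^ j) \<sigma>) ((anqie_map A ^^ j) \<tau>)"
  unfolding window_close_def
proof (intro allI impI)
  fix i assume "i < L"
  have shift_add: "(shift ^^ j) ((shift ^^ i) h) = (shift ^^ (j + i)) h" by (simp add: funpow_add)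
  have "cmod (\<sigma> ((shift ^^ (j + i)) h) - \<tau> ((shift ^^ (j + i)) h)) < \<eta>"
    using \<sigma> \<tau> \<open>i < L\<close> \<open>j < n\<close> norm_diff_triangle_less[of "\<sigma> ((shift ^^ (j + i)) h)" "c (j + i)" "\<eta>/2"
        "\<tau> ((shift ^^ (j + i)) h)" "\<eta>/2"]
    by (simp add: norm_minus_commute)
  then show "cmod ((anqie_map A ^^ j) \<sigma> ((shift ^^ i) h) - (anqie_map A ^^ j) \<tau> ((shift ^^ i) h)) < \<eta>"
    using funpow_anqie_map_apply[OF A anqie_funpow_shift[OF A h]] shift_add by simp
qed

text \<open>By density of point evaluations every character has its windows of length \<open>n + L\<close>
  within \<open>\<eta>/2\<close> of some \<open>c \<in> C\<close>; all characters near the same \<open>c\<close> lie in one member of the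
  \<open>n\<close>-fold join, determined by a representative.\<close>
lemma cover_num_le_card_window_net:
  assumes A: "is_anqie A" and h: "h \<in> A" and "\<eta> > 0"
    and U: "\<And>\<sigma>. \<sigma> \<in> characters A \<Longrightarrow> U \<sigma> \<in> \<U>"
      "\<And>\<sigma> \<tau>. \<sigma> \<in> characters A \<Longrightarrow> \<tau> \<in> characters A \<Longrightarrow> window_close h L \<eta> \<tau> \<sigma> \<Longrightarrow> \<tau> \<in> U \<sigma>"
    and net: "window_net h (\<eta>/4) (n + L) C"
  shows "cover_num (weakstar A) (iter_join (weakstar A) (anqie_map A) \<U> n) \<le> card C"
proof -
  let ?T = "anqie_map A"
  define B where "B = (\<lambda>c. {\<tau> \<in> characters A. \<forall>i<n + L. cmod (\<tau> ((shift ^^ i) h) - c i) < \<eta>/2})"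
  define C' where "C' = {c \<in> C. B c \<noteq> {}}"
  define t where "t = (\<lambda>c. SOME \<tau>. \<tau> \<in> B c)"
  have t: "t c \<in> B c" if "c \<in> C'" for c
    using that unfolding t_def C'_def by (simp add: some_in_eq)
  then have Tt: "(?T ^^ j) (t c) \<in> characters A" if "c \<in> C'" for c j
    using funpow_anqie_map_character[OF A] that unfolding B_def by blast
  define W where "W = (\<lambda>c. characters A \<inter> (\<Inter>j<n. (?T ^^ j) -` U ((?T ^^ j) (t c))))"
  have W_mem: "\<tau> \<in> W c" if "c \<in> C'" "\<tau> \<in> B c" for \<tau> c
  proof -
    have "(?T ^^ j) \<tau> \<in> U ((?T ^^ j) (t c))" if "j < n" for j
      using window_close_funpow_anqie_map[OF A h that] U(2)[OF Tt funpow_anqie_map_character[OF A]]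
        t \<open>c \<in> C'\<close> \<open>\<tau> \<in> B c\<close> unfolding B_def by blast
    then show ?thesis using \<open>\<tau> \<in> B c\<close> unfolding W_def B_def by blast
  qed
  have "W ` C' \<subseteq> iter_join (weakstar A) ?T \<U> n"
    unfolding iter_join_def W_def using U(1) Tt
    by (auto intro!: exI[of _ "\<lambda>j. U ((?T ^^ j) (t _))"])
  moreover have "finite (W ` C')" using net by (simp add: window_net_def C'_def)
  moreover have "\<Union>(W ` C') = topspace (weakstar A)"
  proof
    show "\<Union>(W ` C') \<subseteq> topspace (weakstar A)" unfolding W_def by auto
    show "topspace (weakstar A) \<subseteq> \<Union>(W ` C')"
    proof
      fix \<tau> assume "\<tau> \<in> topspace (weakstar A)"
      then obtain c where "c \<in> C" "\<tau> \<in> B c"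
        using character_near_window_net[OF A h _ net, of \<tau> "\<eta>/2"] \<open>\<eta> > 0\<close> unfolding B_def by auto
      then show "\<tau> \<in> \<Union>(W ` C')" using W_mem[of c \<tau>] unfolding C'_def by blast
    qed
  qed
  ultimately have "cover_num (weakstar A) (iter_join (weakstar A) ?T \<U> n) \<le> card (W ` C')"
    by (rule cover_num_le)
  also have "\<dots> \<le> card C'" using net by (intro card_image_le) (simp add: window_net_def C'_def)
  also have "\<dots> \<le> card C" using net unfolding C'_def window_net_def by (intro card_mono) auto
  finally show ?thesis .
qed

lemma cover_entropy_anqie_gen_le_0:
  assumes h: "h \<in> linf" and sub: "subexp_complexity h"
    and cover: "open_cover (weakstar (anqie_gen h)) \<U>"
  shows "cover_entropy (weakstar (anqie_gen h)) (anqie_map (anqie_gen h)) \<U> \<le> 0"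
proof -
  let ?A = "anqie_gen h"
  let ?X = "weakstar ?A" and ?T = "anqie_map ?A"
  note A = is_anqie_anqie_gen[OF h] and hA = anqie_gen_in[OF h]
  obtain F r where "finite F" "F \<subseteq> ?A" "r > 0"
    and Fr: "\<forall>\<sigma>\<in>characters ?A. \<exists>U\<in>\<U>. weakstar_ball ?A F r \<sigma> \<subseteq> U"
    using weakstar_Lebesgue_number[OF compact_space_weakstar[OF A], of \<U>] cover
    unfolding open_cover_def by auto
  then obtain L \<eta> where "\<eta> > 0" and L: "\<forall>\<sigma>\<in>characters ?A. \<forall>\<tau>\<in>characters ?A.
      window_close h L \<eta> \<tau> \<sigma> \<longrightarrow> \<tau> \<in> weakstar_ball ?A F r \<sigma>"
    using window_close_imp_weakstar_ball[OF h] by blast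
  from Fr obtain U where U: "\<And>\<sigma>. \<sigma> \<in> characters ?A \<Longrightarrow> U \<sigma> \<in> \<U> \<and> weakstar_ball ?A F r \<sigma> \<subseteq> U \<sigma>"
    by (metis (no_types, lifting) bchoice)
  have U_close: "\<tau> \<in> U \<sigma>"
    if "\<sigma> \<in> characters ?A" "\<tau> \<in> characters ?A" "window_close h L \<eta> \<tau> \<sigma>" for \<sigma> \<tau>
    using L U that by blast
  show ?thesis
  proof (rule cover_entropy_le_0I)
    fix a :: real assume "a > 0"
    have "eventually (\<lambda>m. \<exists>C. window_net h (\<eta>/4) m C \<and> real (card C) \<le> exp (a/2 * real m)) sequentially"
      using subexp_complexityD[OF sub, of "\<eta>/4" "a/2"] \<open>\<eta> > 0\<close> \<open>a > 0\<close> by simp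
    then have "eventually (\<lambda>n. \<exists>C. window_net h (\<eta>/4) (n + L) C \<and>
        real (card C) \<le> exp (a/2 * real (n + L))) sequentially"
      by (rule eventually_sequentially_seg[THEN iffD2])
    then show "eventually (\<lambda>n. real (cover_num ?X (iter_join ?X ?T \<U> n)) \<le> exp (a * real n)) sequentially"
      using eventually_ge_at_top[of L]
    proof eventually_elim
      case (elim n)
      then obtain C where C: "window_net h (\<eta>/4) (n + L) C" "real (card C) \<le> exp (a/2 * real (n + L))"
        by blast
      have "cover_num ?X (iter_join ?X ?T \<U> n) \<le> card C"
        by (rule cover_num_le_card_window_net[where U = U, OF A hA \<open>\<eta> > 0\<close> _ U_close C(1)])
          (use U in blast)
      then have "real (cover_num ?X (iter_join ?X ?T \<U> n)) \<le> real (card C)" by simp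
      also have "\<dots> \<le> exp (a/2 * real (n + L))" by (rule C(2))
      also have "\<dots> \<le> exp (a * real n)" using elim(2) \<open>a > 0\<close> by (simp add: field_simps)
      finally show ?case .
    qed
  qed
qed

lemma AE_anqie_gen_le_0:
  "h \<in> linf \<Longrightarrow> subexp_complexity h \<Longrightarrow> AE_anqie (anqie_gen h) \<le> 0"
  unfolding AE_anqie_def top_entropy_def by (intro SUP_least cover_entropy_anqie_gen_le_0) auto

section \<open>The zero entropy anqie\<close>

theorem E0_eq: "E0 = {h \<in> linf. subexp_complexity h}"
proof (intro equalityI subsetI CollectI conjI)
  fix h assume "h \<in> E0"
  then have h: "h \<in> linf" and "AE_anqie (anqie_gen h) = 0" unfolding E0_def AE_fun_def by auto
  then show "subexp_complexity h"
    using subexp_complexity_if_AE_anqie_le_0[OF is_anqie_anqie_gen[OF h] _ anqie_gen_in[OF h]] by simp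
  show "h \<in> linf" by (rule h)
next
  fix h assume "h \<in> {h \<in> linf. subexp_complexity h}"
  then have "h \<in> linf" "AE_anqie (anqie_gen h) \<le> 0" using AE_anqie_gen_le_0 by auto
  moreover have "0 \<le> AE_anqie (anqie_gen h)" unfolding AE_anqie_def by (rule top_entropy_nonneg)
  ultimately show "h \<in> E0" unfolding E0_def AE_fun_def by auto
qed

lemma is_anqie_E0: "is_anqie E0"
  unfolding is_anqie_def E0_eq
proof (intro conjI ballI allI impI)
  show "(\<lambda>_. 1) \<in> {h \<in> linf. subexp_complexity h}"
    using anqie_one[OF linf_is_anqie] subexp_complexity_const by blast
  show "shift ` {h \<in> linf. subexp_complexity h} \<subseteq> {h \<in> linf. subexp_complexity h}"
    using anqie_shift[OF linf_is_anqie] subexp_complexity_shift by blast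
next
  fix f g assume "f \<in> {h \<in> linf. subexp_complexity h}" "g \<in> {h \<in> linf. subexp_complexity h}"
  then show "(\<lambda>n. f n + g n) \<in> {h \<in> linf. subexp_complexity h}"
    and "(\<lambda>n. f n * g n) \<in> {h \<in> linf. subexp_complexity h}"
    using anqie_add[OF linf_is_anqie] anqie_mult[OF linf_is_anqie] subexp_complexity_add subexp_complexity_mult by auto
next
  fix c f assume "f \<in> {h \<in> linf. subexp_complexity h}"
  then show "(\<lambda>n. c * f n) \<in> {h \<in> linf. subexp_complexity h}"
    and "(\<lambda>n. cnj (f n)) \<in> {h \<in> linf. subexp_complexity h}"
    using anqie_scaleC[OF linf_is_anqie] anqie_cnj[OF linf_is_anqie] subexp_complexity_scaleC subexp_complexity_cnj by auto
next
  fix f assume "f \<in> linf" "\<forall>e>0. \<exists>g\<in>{h \<in> linf. subexp_complexity h}. sup_norm (\<lambda>n. f n - g n) < e"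
  then show "f \<in> {h \<in> linf. subexp_complexity h}"
    using subexp_complexity_approx[of f] by auto
qed auto

section \<open>Totally disconnected compact spaces\<close>

lemma clopen_nbhd_if_compact_totally_disconnected:
  assumes cpt: "compact_space X" and td: "totally_disconnected_top X"
    and V: "openin X V" and "x \<in> V"
  shows "\<exists>C. openin X C \<and> closedin X C \<and> x \<in> C \<and> C \<subseteq> V"
proof -
  define K where "K = topspace X - V"
  have x: "x \<in> topspace X" using V \<open>x \<in> V\<close> openin_subset by blast
  have "compactin X K" unfolding K_def using cpt V by (simp add: closedin_compact_space closedin_diff)
  have "\<forall>y\<in>K. \<exists>D. openin X D \<and> closedin X D \<and> x \<in> D \<and> y \<notin> D"
  proof
    fix y assume "y \<in> K"
    then have "y \<in> topspace X" "x \<noteq> y" using \<open>x \<in> V\<close> unfolding K_def by auto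
    then show "\<exists>D. openin X D \<and> closedin X D \<and> x \<in> D \<and> y \<notin> D"
      using td x unfolding totally_disconnected_top_def by blast
  qed
  then obtain D where D: "\<And>y. y \<in> K \<Longrightarrow> openin X (D y) \<and> closedin X (D y) \<and> x \<in> D y \<and> y \<notin> D y"
    by metis
  have "\<And>U. U \<in> (\<lambda>y. topspace X - D y) ` K \<Longrightarrow> openin X U" using D by blast
  moreover have "K \<subseteq> \<Union>((\<lambda>y. topspace X - D y) ` K)" using D unfolding K_def by blast
  ultimately have "\<exists>\<V>. finite \<V> \<and> \<V> \<subseteq> (\<lambda>y. topspace X - D y) ` K \<and> K \<subseteq> \<Union>\<V>"
    by (rule compactinD[OF \<open>compactin X K\<close>])
  then obtain \<V> where "finite \<V>" "\<V> \<subseteq> (\<lambda>y. topspace X - D y) ` K" "K \<subseteq> \<Union>\<V>"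
    by (elim exE conjE)
  then obtain Y where Y: "finite Y" "Y \<subseteq> K" "K \<subseteq> (\<Union>y\<in>Y. topspace X - D y)"
    using finite_subset_image[of \<V> "\<lambda>y. topspace X - D y" K] by blast
  define C where "C = (\<Inter>y\<in>Y. D y) \<inter> topspace X"
  have "openin X C" unfolding C_def using Y D by (intro openin_INT) auto
  moreover have "closedin X C"
  proof (cases "Y = {}")
    case False
    then show ?thesis unfolding C_def using Y D by (intro closedin_Int closedin_INT) auto
  qed (simp add: C_def)
  moreover have "C \<subseteq> V" using Y unfolding C_def K_def by blast
  ultimately show ?thesis using x Y D unfolding C_def by blast
qed

text \<open>Cover the space by finitely many clopen sets on which \<open>f\<close> varies by less than \<open>e\<close>, and
  make \<open>\<phi>\<close> constant on the atoms of the Boolean algebra they generate.\<close>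
lemma locally_constant_approx:
  fixes f :: "'a \<Rightarrow> 'b::metric_space"
  assumes cpt: "compact_space X" and td: "totally_disconnected_top X"
    and f: "continuous_map X euclidean f" and "e > 0"
  shows "\<exists>\<phi>. finite (\<phi> ` topspace X) \<and> (\<forall>x\<in>topspace X. openin X {y \<in> topspace X. \<phi> y = \<phi> x}) \<and>
    (\<forall>x\<in>topspace X. dist (f x) (\<phi> x) < e)"
proof -
  have "\<exists>C. openin X C \<and> closedin X C \<and> x \<in> C \<and> C \<subseteq> {y \<in> topspace X. f y \<in> ball (f x) e}"
    if "x \<in> topspace X" for x
    using openin_continuous_map_preimage[OF f, of "ball (f x) e"] that \<open>e > 0\<close>
    by (intro clopen_nbhd_if_compact_totally_disconnected[OF cpt td]) auto
  then obtain C where C: "\<And>x. x \<in> topspace X \<Longrightarrow>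
      openin X (C x) \<and> closedin X (C x) \<and> x \<in> C x \<and> C x \<subseteq> {y \<in> topspace X. f y \<in> ball (f x) e}"
    by metis
  then have "\<forall>U\<in>C ` topspace X. openin X U" "topspace X \<subseteq> \<Union>(C ` topspace X)" by blast+
  then obtain S where S: "finite S" "S \<subseteq> topspace X" "topspace X \<subseteq> \<Union>(C ` S)"
    using cpt unfolding compact_space_alt by (metis finite_subset_image)
  define atom where "atom = (\<lambda>y. {s \<in> S. y \<in> C s})"
  define \<phi> where "\<phi> = (\<lambda>y. f (SOME s. s \<in> atom y))"
  have atom_open: "openin X {z \<in> topspace X. atom z = atom y}" for y
  proof -
    have "openin X ((\<Inter>s\<in>S. if s \<in> atom y then C s else topspace X - C s) \<inter> topspace X)"
      using S C by (intro openin_INT) auto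
    moreover have "(\<Inter>s\<in>S. if s \<in> atom y then C s else topspace X - C s) \<inter> topspace X
        = {z \<in> topspace X. atom z = atom y}"
      unfolding atom_def by auto
    ultimately show ?thesis by simp
  qed
  have "openin X {y \<in> topspace X. \<phi> y = \<phi> x}" for x
    unfolding openin_subopen[of X "{y \<in> topspace X. \<phi> y = \<phi> x}"]
    using atom_open by (force simp: \<phi>_def)
  moreover have "atom y \<in> Pow S" for y unfolding atom_def by auto
  then have "\<phi> ` topspace X \<subseteq> (\<lambda>T. f (SOME s. s \<in> T)) ` Pow S" unfolding \<phi>_def by blast
  then have "finite (\<phi> ` topspace X)" by (rule finite_subset) (simp add: S(1))
  moreover have "dist (f x) (\<phi> x) < e" if x: "x \<in> topspace X" for x
  proof -
    have "atom x \<noteq> {}" using S(3) x unfolding atom_def by blast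
    then have s: "(SOME s. s \<in> atom x) \<in> atom x" by (simp add: some_in_eq)
    then have "x \<in> C (SOME s. s \<in> atom x)" "(SOME s. s \<in> atom x) \<in> topspace X"
      using S(2) unfolding atom_def by auto
    then show ?thesis using C by (force simp: \<phi>_def dist_commute)
  qed
  ultimately show ?thesis by blast
qed

section \<open>Finite range elements and total disconnectedness\<close>

text \<open>The clopen set separating two characters is a level set of a finite range element
  on which they differ; it is open because characters take values in the finite range.\<close>
lemma totally_disconnected_weakstar_if_finite_range_dense:
  assumes A: "is_anqie A"
    and dense: "\<And>g e. g \<in> A \<Longrightarrow> e > 0 \<Longrightarrow> \<exists>h\<in>A. finite (range h) \<and> sup_norm (\<lambda>n. g n - h n) < e"
  shows "totally_disconnected_top (weakstar A)"
  unfolding totally_disconnected_top_def topspace_weakstar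
proof (intro ballI impI)
  fix \<rho>1 \<rho>2 assume \<rho>1: "\<rho>1 \<in> characters A" and \<rho>2: "\<rho>2 \<in> characters A" and "\<rho>1 \<noteq> \<rho>2"
  then obtain g where "\<rho>1 g \<noteq> \<rho>2 g" by auto
  then have g: "g \<in> A" using character_outside[OF \<rho>1] character_outside[OF \<rho>2] by metis
  define e where "e = cmod (\<rho>1 g - \<rho>2 g) / 2"
  have "e > 0" unfolding e_def using \<open>\<rho>1 g \<noteq> \<rho>2 g\<close> by simp
  then obtain h where h: "h \<in> A" "finite (range h)" "sup_norm (\<lambda>n. g n - h n) < e"
    using dense[OF g] by blast
  have near: "cmod (\<rho> g - \<rho> h) < e" if "\<rho> \<in> characters A" for \<rho>
    using norm_character_le_sup_norm[OF that A anqie_diff[OF A g h(1)]] character_diff[OF that A g h(1)] h(3)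
    by simp
  have "\<rho>1 h \<noteq> \<rho>2 h"
  proof
    assume "\<rho>1 h = \<rho>2 h"
    then have "cmod (\<rho>1 g - \<rho>2 g) < e + e"
      using norm_diff_triangle_less[OF near[OF \<rho>1], of "\<rho>2 g" e] near[OF \<rho>2] by (simp add: norm_minus_commute)
    then show False unfolding e_def by simp
  qed
  define C where "C = {\<rho> \<in> characters A. \<rho> h = \<rho>1 h}"
  have "openin (weakstar A) {\<rho> \<in> topspace (weakstar A). \<rho> h \<in> - (range h - {\<rho>1 h})}"
    by (rule openin_continuous_map_preimage[OF continuous_map_weakstar_eval])
      (simp only: open_openin[symmetric], intro open_Compl finite_imp_closed finite_Diff h(2))
  moreover have "{\<rho> \<in> topspace (weakstar A). \<rho> h \<in> - (range h - {\<rho>1 h})} = C"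
    unfolding C_def using character_in_finite_range[OF _ A h(1,2)] by auto
  ultimately have "openin (weakstar A) C" by simp
  moreover have "closedin (weakstar A) C"
    using closedin_continuous_map_preimage[OF continuous_map_weakstar_eval, of "{\<rho>1 h}" A h]
    by (simp add: C_def)
  moreover have "\<rho>1 \<in> C" "\<rho>2 \<notin> C" using \<rho>1 \<open>\<rho>1 h \<noteq> \<rho>2 h\<close> unfolding C_def by auto
  ultimately show "\<exists>C. openin (weakstar A) C \<and> closedin (weakstar A) C \<and> \<rho>1 \<in> C \<and> \<rho>2 \<notin> C"
    by blast
qed

lemma F0_subset_E0: "F0 \<subseteq> E0"
  unfolding F0_def E0_def by auto

lemma norm_closure_F0_subset_E0: "norm_closure F0 \<subseteq> E0"
  using anqie_closed[OF is_anqie_E0] F0_subset_E0 unfolding norm_closure_def by blast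

text \<open>Pull a locally constant approximation of the Gelfand transform of \<open>g\<close> back along the
  point evaluations; the result is locally determined by finitely many elements of \<open>E0\<close>,
  hence has zero entropy.\<close>
lemma E0_subset_norm_closure_F0:
  assumes td: "totally_disconnected_top (weakstar E0)"
  shows "E0 \<subseteq> norm_closure F0"
proof
  fix g assume g: "g \<in> E0"
  have "\<exists>h\<in>F0. sup_norm (\<lambda>n. g n - h n) < e" if "e > 0" for e
  proof -
    obtain \<phi> where \<phi>: "finite (\<phi> ` characters E0)"
      "\<And>\<sigma>. \<sigma> \<in> characters E0 \<Longrightarrow> openin (weakstar E0) {\<tau> \<in> characters E0. \<phi> \<tau> = \<phi> \<sigma>}"
      "\<And>\<sigma>. \<sigma> \<in> characters E0 \<Longrightarrow> dist (\<sigma> g) (\<phi> \<sigma>) < e/2"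
      using locally_constant_approx[OF compact_space_weakstar[OF is_anqie_E0] td
          continuous_map_weakstar_eval, of "e/2" g] \<open>e > 0\<close> by auto
    obtain F r where F: "finite F" "F \<subseteq> E0" "r > 0"
      and loc: "\<forall>\<sigma>\<in>characters E0. \<forall>\<tau>\<in>weakstar_ball E0 F r \<sigma>. \<phi> \<tau> = \<phi> \<sigma>"
      using weakstar_locally_constant_uniform[OF is_anqie_E0 \<phi>(2)] by blast
    define h where "h = (\<lambda>m. \<phi> (point_eval E0 m))"
    have "range h \<subseteq> \<phi> ` characters E0" using point_eval_character[OF is_anqie_E0] by (auto simp: h_def)
    then have fin: "finite (range h)" using \<phi>(1) by (rule finite_subset)
    have "subexp_complexity h"
    proof (rule subexp_complexity_if_locally_determined[OF F(1) _ F(3)])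
      show "subexp_complexity q" if "q \<in> F" for q using that F(2) E0_eq by blast
      fix m m' assume "\<forall>q\<in>F. cmod (q m - q m') < r"
      then have "point_eval E0 m' \<in> weakstar_ball E0 F r (point_eval E0 m)"
        using F(2) point_eval_character[OF is_anqie_E0]
        by (auto simp: weakstar_ball_def point_eval_def norm_minus_commute)
      then have "\<phi> (point_eval E0 m') = \<phi> (point_eval E0 m)"
        using loc point_eval_character[OF is_anqie_E0, of m] by blast
      then show "h m = h m'" by (simp add: h_def)
    qed
    moreover have "h \<in> linf" using fin unfolding linf_def by (simp add: finite_imp_bounded)
    ultimately have "h \<in> F0" using fin E0_eq unfolding F0_def E0_def by blast
    moreover have "cmod (g m - h m) \<le> e/2" for m
      using \<phi>(3)[OF point_eval_character[OF is_anqie_E0, of m]] g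
      by (simp add: h_def point_eval_def dist_norm less_imp_le)
    then have "sup_norm (\<lambda>n. g n - h n) < e" using sup_norm_le[of "\<lambda>n. g n - h n"] \<open>e > 0\<close> by fastforce
    ultimately show ?thesis by blast
  qed
  then show "g \<in> norm_closure F0" using g unfolding norm_closure_def E0_def by blast
qed

theorem proposition5p7:
  shows "totally_disconnected_top (weakstar E0) \<longleftrightarrow> E0 = norm_closure F0"
proof
  assume "totally_disconnected_top (weakstar E0)"
  then show "E0 = norm_closure F0"
    using E0_subset_norm_closure_F0 norm_closure_F0_subset_E0 by blast
next
  assume eq: "E0 = norm_closure F0"
  show "totally_disconnected_top (weakstar E0)"
  proof (rule totally_disconnected_weakstar_if_finite_range_dense[OF is_anqie_E0])
    fix g e assume "g \<in> E0" "e > (0::real)"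
    then obtain h where "h \<in> F0" "sup_norm (\<lambda>n. g n - h n) < e"
      using eq unfolding norm_closure_def by blast
    then show "\<exists>h\<in>E0. finite (range h) \<and> sup_norm (\<lambda>n. g n - h n) < e"
      using F0_subset_E0 unfolding F0_def by blast
  qed
qed

end
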